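(* Let $N\ge 2$ be an integer, $W>0$, $\sigma>0$, $\sigma_{\rm I}>0$ and $\gamma>0$. For $k=2,\dots,N$ let $\mu_k=J_0\!\left(\frac{2\pi(k-1)}{N-1}W\right)$, where $J_0$ is the zero-order Bessel function of the first kind. Let $x_0,x_1,\dots,x_N,y_0,y_1,\dots,y_N,x_0^{\rm I},x_1^{\rm I},\dots,x_N^{\rm I},y_0^{\rm I},y_1^{\rm I},\dots,y_N^{\rm I}$ be mutually independent real Gaussian random variables, each with mean $0$ and variance $\tfrac12$. Define the complex random variables $$g_1=\sigma x_0+j\sigma y_0,\qquad g_k=\sigma\Big(\sqrt{1-\mu_k^2}\,x_k+\mu_k x_0\Big)+j\sigma\Big(\sqrt{1-\mu_k^2}\,y_k+\mu_k y_0\Big),\ k=2,\dots,N,$$ $$g_1^{\rm I}=\sigma_{\rm I} x_0^{\rm I}+j\sigma_{\rm I} y_0^{\rm I},\qquad g_k^{\rm I}=\sigma_{\rm I}\Big(\sqrt{1-\mu_k^2}\,x_k^{\rm I}+\mu_k x_0^{\rm I}\Big)+j\sigma_{\rm I}\Big(\sqrt{1-\mu_k^2}\,y_k^{\rm I}+\mu_k y_0^{\rm I}\Big),\ k=2,\dots,N,$$ and let ${\rm SIR}=\max_{1\le k\le N}\frac{|g_k|^2}{|g_k^{\rm I}|^2}$. Write $a=\frac{\sigma_{\rm I}^2\gamma}{\sigma^2}$. Then $$\Pr({\rm SIR}\le\gamma)\le\int_0^\infty e^{-z}\left(1-e^{-a z}\right)\prod_{k=2}^N\left[1-\frac{1}{a+1}\cdot\frac{e^{-\frac{1}{a+1}\frac{\mu_k^2}{1-\mu_k^2}\,a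 z}}{1+\frac{4}{a+1}\frac{\mu_k^2}{1-\mu_k^2}\,a z}\right]dz.$$
   Context: This models a receiver with a "fluid antenna" that can be placed at one of $N$ ports evenly spaced over a length $W\lambda$ ($\lambda$ the wavelength); $g_k$ is the desired-signal channel and $g_k^{\rm I}$ the aggregate interference channel at port $k$, and the receiver selects the port maximizing the signal-to-interference ratio. *)

theory Defs
  imports "HOL-Probability.Probability"
begin

definition besselJ0 :: "real \<Rightarrow> real" where
  "besselJ0 x = (\<Sum>m. (-1) ^ m * (x / 2) ^ (2 * m) / (fact m) ^ 2)"

definition fa_mu :: "nat \<Rightarrow> real \<Rightarrow> nat \<Rightarrow> real" where
  "fa_mu N W k = besselJ0 (2 * pi * real (k - 1) / real (N - 1) * W)"

text \<open>Channel at port k built from real parts xs and imaginary parts ys (index 0 = common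
  component), scale s.\<close>
definition fa_chan :: "nat \<Rightarrow> real \<Rightarrow> real \<Rightarrow> (nat \<Rightarrow> real) \<Rightarrow> (nat \<Rightarrow> real) \<Rightarrow> nat \<Rightarrow> complex" where
  "fa_chan N W s xs ys k =
     (if k = 1 then Complex (s * xs 0) (s * ys 0)
      else Complex (s * (sqrt (1 - (fa_mu N W k)\<^sup>2) * xs k + fa_mu N W k * xs 0))
                   (s * (sqrt (1 - (fa_mu N W k)\<^sup>2) * ys k + fa_mu N W k * ys 0)))"

end

theory Submission
  imports Defs
begin

text \<open>Conditionally on port 1, the ports \<open>k \<ge> 2\<close> are independent, and port \<open>k\<close> sees signal
  and interference that are complex Gaussians with means \<open>\<mu>\<^sub>k\<close> times those at port 1 and variances
  scaled by \<open>1 - \<mu>\<^sub>k\<^sup>2\<close>, which is positive because \<open>|J\<^sub>0(x)| < 1\<close> for \<open>x \<noteq> 0\<close> (an energy argument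
  for Bessel's equation). Given port 1, a nonzero mean only makes the signal larger in law (Anderson's
  inequality in each coordinate), and averaging the resulting tail \<open>exp (- a |interference|\<^sup>2)\<close> over
  the interference is a Gaussian integral; this bounds the conditional outage probability of port \<open>k\<close>
  by \<open>1 - exp (- a c z / (1 + a)) / (1 + a)\<close>, \<open>c = \<mu>\<^sub>k\<^sup>2 / (1 - \<mu>\<^sub>k\<^sup>2)\<close>, \<open>z = |g\<^sub>1\<^sup>I|\<^sup>2 / \<sigma>\<^sub>I\<^sup>2\<close>,
  which is below the factor in the statement. Replacing the outage indicators of the ports \<open>k \<ge> 2\<close>
  by these bounds one at a time, and finally conditioning on the interference at port 1 (the signal
  there is in outage with probability \<open>1 - exp (- a z)\<close>, and \<open>z\<close> is exponentially distributed),
  gives the integral.\<close>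

section \<open>The Bessel function \<open>J\<^sub>0\<close>\<close>

definition powser :: "(nat \<Rightarrow> real) \<Rightarrow> real \<Rightarrow> real" where
  "powser c y = (\<Sum>n. c n * y ^ n)"

lemma powser_has_real_derivative:
  assumes "\<And>y. summable (\<lambda>n. c n * y ^ n)"
  shows "(powser c has_real_derivative powser (diffs c) y) (at y)"
  unfolding powser_def using termdiffs_strong_converges_everywhere[OF assms] .

lemma powser_split_head:
  assumes "summable (\<lambda>n. c n * y ^ n)"
  shows "powser c y = c 0 + (\<Sum>n. c (Suc n) * y ^ Suc n)"
  unfolding powser_def using suminf_split_head[OF assms] by simp

definition besselJ0_coeff :: "nat \<Rightarrow> real" where
  "besselJ0_coeff n = (-1) ^ n / (fact n)\<^sup>2"

lemma besselJ0_eq_powser: "besselJ0 x = powser besselJ0_coeff (x\<^sup>2 / 4)"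
proof -
  have "(-1) ^ m * (x / 2) ^ (2 * m) / (fact m)\<^sup>2 = besselJ0_coeff m * (x\<^sup>2 / 4) ^ m" for m
    by (simp add: besselJ0_coeff_def power_mult power_divide)
  then show ?thesis unfolding besselJ0_def powser_def by simp
qed

lemma summable_besselJ0_coeff: "summable (\<lambda>n. besselJ0_coeff n * y ^ n)"
proof (rule summable_comparison_test)
  have "\<bar>besselJ0_coeff n\<bar> \<le> inverse (fact n)" for n
  proof -
    have "\<bar>besselJ0_coeff n\<bar> = inverse (fact n) * inverse (fact n)"
      by (simp add: besselJ0_coeff_def abs_mult power2_eq_square divide_inverse)
    moreover have "inverse (fact n :: real) \<le> 1" by (simp add: inverse_le_1_iff)
    ultimately show ?thesis by (simp add: mult_left_le)
  qed
  then show "\<exists>N. \<forall>n\<ge>N. norm (besselJ0_coeff n * y ^ n) \<le> inverse (fact n) * \<bar>y\<bar> ^ n"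
    by (auto simp: abs_mult power_abs intro!: mult_right_mono)
  show "summable (\<lambda>n. inverse (fact n) * \<bar>y\<bar> ^ n)" by (rule summable_exp)
qed

lemma summable_diffs_besselJ0_coeff: "summable (\<lambda>n. diffs besselJ0_coeff n * y ^ n)"
  by (intro termdiff_converges_all summable_besselJ0_coeff)

lemma besselJ0_coeff_Suc:
  "besselJ0_coeff (Suc n) = - besselJ0_coeff n / (real (Suc n))\<^sup>2"
  by (simp add: besselJ0_coeff_def power2_eq_square field_simps)

lemma besselJ0_coeff_ode:
  "diffs (diffs besselJ0_coeff) n + diffs besselJ0_coeff (Suc n) + besselJ0_coeff (Suc n) = 0"
proof -
  have "diffs (diffs besselJ0_coeff) n + diffs besselJ0_coeff (Suc n)
      = (real (Suc (Suc n)))\<^sup>2 * besselJ0_coeff (Suc (Suc n))"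
    by (simp add: diffs_def power2_eq_square algebra_simps)
  also have "\<dots> = - besselJ0_coeff (Suc n)"
    unfolding besselJ0_coeff_Suc[of "Suc n"] by (simp del: of_nat_Suc)
  finally show ?thesis by simp
qed

lemma powser_ode:
  assumes summable: "\<And>y. summable (\<lambda>n. c n * y ^ n)"
    and rec: "\<And>n. diffs (diffs c) n + diffs c (Suc n) + c (Suc n) = 0"
    and init: "diffs c 0 + c 0 = 0"
  shows "y * powser (diffs (diffs c)) y + powser (diffs c) y + powser c y = 0"
proof -
  have s: "summable (\<lambda>n. c n * y ^ n)" "summable (\<lambda>n. diffs c n * y ^ n)"
    "summable (\<lambda>n. diffs (diffs c) n * y ^ n)"
    using summable termdiff_converges_all by blast+
  have s_Suc: "summable (\<lambda>n. diffs c (Suc n) * y ^ Suc n)" "summable (\<lambda>n. c (Suc n) * y ^ Suc n)"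
    using s(1,2) by (subst summable_Suc_iff; simp)+
  have s_mult: "summable (\<lambda>n. diffs (diffs c) n * y ^ Suc n)"
    using summable_mult[OF s(3), of y] by (simp add: ac_simps)
  have "y * powser (diffs (diffs c)) y = (\<Sum>n. diffs (diffs c) n * y ^ Suc n)"
    unfolding powser_def using suminf_mult[OF s(3), of y] by (simp add: ac_simps)
  moreover have "(\<Sum>n. diffs (diffs c) n * y ^ Suc n) + (\<Sum>n. diffs c (Suc n) * y ^ Suc n)
      + (\<Sum>n. c (Suc n) * y ^ Suc n)
      = (\<Sum>n. (diffs (diffs c) n + diffs c (Suc n) + c (Suc n)) * y ^ Suc n)"
    using s_Suc s_mult by (simp add: suminf_add summable_add algebra_simps)
  ultimately show ?thesis
    using powser_split_head[OF s(1)] powser_split_head[OF s(2)] rec init by simp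
qed

definition besselJ0_energy :: "real \<Rightarrow> real" where
  "besselJ0_energy y = (powser besselJ0_coeff y)\<^sup>2 + y * (powser (diffs besselJ0_coeff) y)\<^sup>2"

text \<open>With \<open>F = powser besselJ0_coeff\<close>, the equation \<open>y F'' + F' + F = 0\<close> turns the derivative
  \<open>2 F F' + F'\<^sup>2 + 2 y F' F''\<close> of the energy into \<open>-F'\<^sup>2\<close>.\<close>
lemma besselJ0_energy_has_derivative:
  "(besselJ0_energy has_real_derivative - (powser (diffs besselJ0_coeff) y)\<^sup>2) (at y)"
proof -
  define F F' F'' where "F = powser besselJ0_coeff" and "F' = powser (diffs besselJ0_coeff)"
    and "F'' = powser (diffs (diffs besselJ0_coeff))"
  have "(F has_real_derivative F' y) (at y)" "(F' has_real_derivative F'' y) (at y)" for y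
    unfolding F_def F'_def F''_def
    by (intro powser_has_real_derivative summable_besselJ0_coeff summable_diffs_besselJ0_coeff)+
  then have "(besselJ0_energy has_real_derivative 2 * F y * F' y + ((F' y)\<^sup>2 + y * (2 * F' y * F'' y))) (at y)"
    unfolding besselJ0_energy_def F_def[symmetric] F'_def[symmetric]
    by (auto intro!: derivative_eq_intros)
  moreover have "y * F'' y = - F' y - F y"
    using powser_ode[OF summable_besselJ0_coeff besselJ0_coeff_ode, of y]
    by (simp add: F_def F'_def F''_def diffs_def besselJ0_coeff_def)
  moreover have "2 * F y * F' y + ((F' y)\<^sup>2 + y * (2 * F' y * F'' y))
      = 2 * F' y * (F y + F' y + y * F'' y) - (F' y)\<^sup>2"
    by (simp add: power2_eq_square algebra_simps)
  ultimately show ?thesis unfolding F'_def[symmetric] by simp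
qed

text \<open>The energy is 1 at 0, non-increasing, and strictly decreasing near 0 since \<open>F'(0) = -1\<close>.\<close>
lemma besselJ0_powser_sq_less_1:
  assumes "y > 0"
  shows "(powser besselJ0_coeff y)\<^sup>2 < 1"
proof -
  define F' where "F' = powser (diffs besselJ0_coeff)"
  note dE = besselJ0_energy_has_derivative[folded F'_def]
  have E0: "besselJ0_energy 0 = 1" and F'0: "F' 0 = -1"
    unfolding besselJ0_energy_def F'_def powser_def powser_zero
    by (simp_all add: diffs_def besselJ0_coeff_def)
  obtain d where d: "d > 0" "\<And>x. \<bar>x - 0\<bar> < d \<Longrightarrow> \<bar>F' x - F' 0\<bar> < 1"
    using DERIV_isCont[OF powser_has_real_derivative[OF summable_diffs_besselJ0_coeff], of 0]
    unfolding continuous_at_eps_delta F'_def by (metis dist_real_def zero_less_one)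
  define e where "e = min (d / 2) y"
  have e: "e > 0" "e \<le> y" "e < d" using d assms by (auto simp: e_def)
  have "besselJ0_energy e < besselJ0_energy 0"
  proof (rule DERIV_neg_imp_decreasing[OF e(1)])
    fix x assume "0 \<le> x" "x \<le> e"
    then have "F' x \<noteq> 0" using d(2)[of x] e F'0 by auto
    then show "\<exists>z. DERIV besselJ0_energy x :> z \<and> z < 0"
      using dE[of x] by (intro exI[of _ "- (F' x)\<^sup>2"]) auto
  qed
  moreover have "besselJ0_energy y \<le> besselJ0_energy e"
    using e(2) by (rule DERIV_nonpos_imp_nonincreasing) (meson dE neg_le_0_iff_le zero_le_power2)
  moreover have "(powser besselJ0_coeff y)\<^sup>2 \<le> besselJ0_energy y"
    using assms by (simp add: besselJ0_energy_def)
  ultimately show ?thesis using E0 by simp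
qed

lemma besselJ0_sq_less_1: "x \<noteq> 0 \<Longrightarrow> (besselJ0 x)\<^sup>2 < 1"
  unfolding besselJ0_eq_powser by (rule besselJ0_powser_sq_less_1) simp

section \<open>Radial integrals\<close>

lemma nn_integral_atLeast_0_SUP:
  fixes g :: "real \<Rightarrow> ennreal" and b :: "nat \<Rightarrow> real"
  assumes [measurable]: "g \<in> borel_measurable borel" and "incseq b" and "\<And>x. \<exists>n. x \<le> b n"
  shows "(\<integral>\<^sup>+x. g x * indicator {0..} x \<partial>lborel) = (SUP n. \<integral>\<^sup>+x. g x * indicator {0..b n} x \<partial>lborel)"
proof -
  let ?f = "\<lambda>n x. g x * indicator {0..b n} x"
  have mono: "incseq ?f"
    using \<open>incseq b\<close> by (auto simp: incseq_def le_fun_def split: split_indicator intro: order_trans)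
  have "(SUP n. ?f n x) = g x * indicator {0..} x" for x
  proof (rule LIMSEQ_unique[OF LIMSEQ_SUP])
    show "incseq (\<lambda>n. ?f n x)" using mono by (auto simp: incseq_def le_fun_def)
    obtain n where n: "x \<le> b n" using assms(3) by blast
    have "eventually (\<lambda>m. ?f m x = g x * indicator {0..} x) sequentially"
    proof (rule eventually_sequentiallyI[where c=n])
      fix m assume "n \<le> m"
      then have "b n \<le> b m" using \<open>incseq b\<close> by (simp add: incseq_def)
      then show "?f m x = g x * indicator {0..} x" using n by (auto split: split_indicator)
    qed
    then show "(\<lambda>n. ?f n x) \<longlonglongrightarrow> g x * indicator {0..} x" by (rule tendsto_eventually)
  qed
  then have "(\<integral>\<^sup>+x. g x * indicator {0..} x \<partial>lborel) = (\<integral>\<^sup>+x. (SUP n. ?f n x) \<partial>lborel)" by simp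
  also have "\<dots> = (SUP n. \<integral>\<^sup>+x. ?f n x \<partial>lborel)"
    by (rule nn_integral_monotone_convergence_SUP[OF mono]) simp
  finally show ?thesis .
qed

lemma nn_integral_atLeast_0_substitution_square:
  fixes f :: "real \<Rightarrow> real"
  assumes [measurable]: "f \<in> borel_measurable borel"
  shows "(\<integral>\<^sup>+z. ennreal (f z) * indicator {0..} z \<partial>lborel) =
         (\<integral>\<^sup>+x. ennreal (f (x\<^sup>2) * (2 * x)) * indicator {0..} x \<partial>lborel)"
proof -
  have "\<exists>n. x \<le> (real n)\<^sup>2" for x :: real
  proof -
    obtain n :: nat where "max x 1 \<le> real n" using real_arch_simple by blast
    then have "x \<le> real n * real n" by (smt (verit) mult_le_cancel_left1)
    then show ?thesis by (auto simp: power2_eq_square)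
  qed
  moreover have "incseq (\<lambda>n. (real n)\<^sup>2)" by (auto simp: incseq_def intro: power_mono)
  ultimately have "(\<integral>\<^sup>+z. ennreal (f z) * indicator {0..} z \<partial>lborel) =
        (SUP n. \<integral>\<^sup>+z. ennreal (f z) * indicator {0..(real n)\<^sup>2} z \<partial>lborel)"
    by (intro nn_integral_atLeast_0_SUP) simp_all
  also have "\<dots> = (SUP n. \<integral>\<^sup>+x. ennreal (f (x\<^sup>2) * (2 * x)) * indicator {0..real n} x \<partial>lborel)"
  proof (rule SUP_cong[OF refl])
    fix n :: nat
    have "(\<integral>\<^sup>+z. ennreal (f z) * indicator {0..(real n)\<^sup>2} z \<partial>lborel) =
          (\<integral>\<^sup>+z. ennreal (f z * indicator {(\<lambda>x. x\<^sup>2) 0..(\<lambda>x. x\<^sup>2) (real n)} z) \<partial>lborel)"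
      by (intro nn_integral_cong) (auto split: split_indicator)
    also have "\<dots> = (\<integral>\<^sup>+x. ennreal (f (x\<^sup>2) * (2 * x) * indicator {0..real n} x) \<partial>lborel)"
      by (rule nn_integral_substitution[where g' = "\<lambda>x. 2 * x"])
         (auto intro!: derivative_eq_intros continuous_intros simp: set_borel_measurable_def)
    finally show "(\<integral>\<^sup>+z. ennreal (f z) * indicator {0..(real n)\<^sup>2} z \<partial>lborel) =
          (\<integral>\<^sup>+x. ennreal (f (x\<^sup>2) * (2 * x)) * indicator {0..real n} x \<partial>lborel)"
      by (simp add: indicator_mult_ennreal mult.commute)
  qed
  also have "\<dots> = (\<integral>\<^sup>+x. ennreal (f (x\<^sup>2) * (2 * x)) * indicator {0..} x \<partial>lborel)"
    by (rule nn_integral_atLeast_0_SUP[symmetric]) (auto simp: incseq_def real_arch_simple)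
  finally show ?thesis .
qed

lemma nn_integral_even:
  fixes g :: "real \<Rightarrow> ennreal"
  assumes [measurable]: "g \<in> borel_measurable borel" and even: "\<And>y. g (- y) = g y"
  shows "(\<integral>\<^sup>+y. g y \<partial>lborel) = 2 * (\<integral>\<^sup>+y. g y * indicator {0..} y \<partial>lborel)"
proof -
  have "(\<integral>\<^sup>+y. g y \<partial>lborel) = (\<integral>\<^sup>+y. g y * indicator {0..} y + g y * indicator {..<0} y \<partial>lborel)"
    by (intro nn_integral_cong) (auto split: split_indicator)
  also have "\<dots> = (\<integral>\<^sup>+y. g y * indicator {0..} y \<partial>lborel) + (\<integral>\<^sup>+y. g y * indicator {..<0} y \<partial>lborel)"
    by (rule nn_integral_add) auto
  also have "(\<integral>\<^sup>+y. g y * indicator {..<0} y \<partial>lborel)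
      = (\<integral>\<^sup>+y. g (0 + (-1) * y) * indicator {..<0} (0 + (-1) * y) \<partial>lborel)"
    using nn_integral_real_affine[of "\<lambda>y. g y * indicator {..<0} y" "-1" 0] by simp
  also have "\<dots> = (\<integral>\<^sup>+y. g y * indicator {0..} y \<partial>lborel)"
    by (intro nn_integral_cong_AE, use AE_lborel_singleton[of 0] in eventually_elim)
       (auto simp: even split: split_indicator)
  finally show ?thesis by (simp add: mult_2)
qed

lemma nn_integral_atLeast_0_inverse_1_plus_square:
  "(\<integral>\<^sup>+s. ennreal (1 / (1 + s\<^sup>2)) * indicator {0..} s \<partial>lborel) = ennreal (pi / 2)"
proof -
  have "(\<integral>\<^sup>+s. ennreal (1 / (1 + s\<^sup>2)) * indicator {0..} s \<partial>lborel) = ennreal (pi / 2 - arctan 0)"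
    by (rule nn_integral_FTC_atLeast[OF _ _ _ tendsto_arctan_at_top])
       (auto intro!: derivative_eq_intros simp: add_nonneg_eq_0_iff field_simps power2_eq_square)
  then show ?thesis by simp
qed

lemma nn_integral_ray_rescale:
  fixes h :: "real \<Rightarrow> real"
  assumes [measurable]: "h \<in> borel_measurable borel" and nn: "\<And>z. 0 \<le> h z" and "x > 0"
  shows "(\<integral>\<^sup>+y. ennreal (h (x\<^sup>2 + y\<^sup>2)) * indicator {0..} y \<partial>lborel) =
         (\<integral>\<^sup>+s. ennreal (x * h (x\<^sup>2 * (1 + s\<^sup>2))) * indicator {0..} s \<partial>lborel)"
proof -
  have "(\<integral>\<^sup>+y. ennreal (h (x\<^sup>2 + y\<^sup>2)) * indicator {0..} y \<partial>lborel)
      = ennreal \<bar>x\<bar> * (\<integral>\<^sup>+s. ennreal (h (x\<^sup>2 + (0 + x * s)\<^sup>2)) * indicator {0..} (0 + x * s) \<partial>lborel)"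
    by (rule nn_integral_real_affine) (use \<open>x > 0\<close> in auto)
  also have "\<dots> = (\<integral>\<^sup>+s. ennreal x * (ennreal (h (x\<^sup>2 * (1 + s\<^sup>2))) * indicator {0..} s) \<partial>lborel)"
  proof -
    have "ennreal (h (x\<^sup>2 + (0 + x * s)\<^sup>2)) * indicator {0..} (0 + x * s) =
          ennreal (h (x\<^sup>2 * (1 + s\<^sup>2))) * indicator {0..} s" for s
      using \<open>x > 0\<close> by (auto simp: power_mult_distrib algebra_simps zero_le_mult_iff indicator_def)
    then show ?thesis using \<open>x > 0\<close> by (simp add: nn_integral_cmult)
  qed
  also have "\<dots> = (\<integral>\<^sup>+s. ennreal (x * h (x\<^sup>2 * (1 + s\<^sup>2))) * indicator {0..} s \<partial>lborel)"
    using \<open>x > 0\<close> nn by (intro nn_integral_cong) (simp add: ennreal_mult mult.assoc)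
  finally show ?thesis .
qed

lemma nn_integral_ray_radial:
  fixes h :: "real \<Rightarrow> real"
  assumes [measurable]: "h \<in> borel_measurable borel" and nn: "\<And>z. 0 \<le> h z"
  shows "(\<integral>\<^sup>+x. ennreal (x * h (x\<^sup>2 * (1 + s\<^sup>2))) * indicator {0..} x \<partial>lborel) =
         ennreal (1 / (2 * (1 + s\<^sup>2))) * (\<integral>\<^sup>+z. ennreal (h z) * indicator {0..} z \<partial>lborel)"
proof -
  define c where "c = sqrt (1 + s\<^sup>2)"
  have c: "c > 0" "c\<^sup>2 = 1 + s\<^sup>2" unfolding c_def by (auto simp: add_pos_nonneg)
  have "(\<integral>\<^sup>+x. ennreal (x * h (x\<^sup>2 * (1 + s\<^sup>2))) * indicator {0..} x \<partial>lborel) =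
        ennreal \<bar>1/c\<bar> * (\<integral>\<^sup>+w. ennreal ((0 + 1/c * w) * h ((0 + 1/c * w)\<^sup>2 * (1 + s\<^sup>2)))
          * indicator {0..} (0 + 1/c * w) \<partial>lborel)"
    by (rule nn_integral_real_affine) (use c in auto)
  also have "\<dots> = ennreal (1/c) * (\<integral>\<^sup>+w. ennreal (1/(2*c)) * (ennreal (h (w\<^sup>2) * (2 * w))
          * indicator {0..} w) \<partial>lborel)"
  proof -
    have "ennreal ((0 + 1/c * w) * h ((0 + 1/c * w)\<^sup>2 * (1 + s\<^sup>2))) * indicator {0..} (0 + 1/c * w) =
          ennreal (1/(2*c)) * (ennreal (h (w\<^sup>2) * (2 * w)) * indicator {0..} w)" for w
    proof (cases "w \<ge> 0")
      case True
      have "(1/c * w)\<^sup>2 * (1 + s\<^sup>2) = w\<^sup>2" using c by (simp add: power_mult_distrib power_divide add_nonneg_eq_0_iff)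
      moreover have "1/c * w * h (w\<^sup>2) = (1/(2*c)) * (h (w\<^sup>2) * (2 * w))" by (simp add: field_simps)
      moreover have "ennreal ((1/(2*c)) * (h (w\<^sup>2) * (2 * w))) = ennreal (1/(2*c)) * ennreal (h (w\<^sup>2) * (2 * w))"
        by (rule ennreal_mult) (use True c nn[of "w\<^sup>2"] in auto)
      ultimately show ?thesis using True c by (simp add: mult.assoc mult.commute)
    next
      case False then show ?thesis using c by (simp add: indicator_def zero_le_divide_iff zero_le_mult_iff)
    qed
    then show ?thesis using c by simp
  qed
  also have "\<dots> = ennreal (1/c) * ennreal (1/(2*c))
      * (\<integral>\<^sup>+w. ennreal (h (w\<^sup>2) * (2 * w)) * indicator {0..} w \<partial>lborel)"
    by (simp add: nn_integral_cmult mult.assoc)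
  also have "ennreal (1/c) * ennreal (1/(2*c)) = ennreal (1 / (2 * (1 + s\<^sup>2)))"
    using c by (simp add: ennreal_mult[symmetric] field_simps power2_eq_square)
  finally show ?thesis
    using nn_integral_atLeast_0_substitution_square[of h] by simp
qed

lemma nn_integral_quadrant_radial:
  fixes h :: "real \<Rightarrow> real"
  assumes [measurable]: "h \<in> borel_measurable borel" and nn: "\<And>z. 0 \<le> h z"
  shows "(\<integral>\<^sup>+x. (\<integral>\<^sup>+y. ennreal (h (x\<^sup>2 + y\<^sup>2)) * indicator {0..} y \<partial>lborel) * indicator {0..} x \<partial>lborel)
    = ennreal (1 / 2) * ennreal (pi / 2) * (\<integral>\<^sup>+z. ennreal (h z) * indicator {0..} z \<partial>lborel)"
proof -
  define I where "I = (\<integral>\<^sup>+z. ennreal (h z) * indicator {0..} z \<partial>lborel)"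
  have "(\<integral>\<^sup>+x. (\<integral>\<^sup>+y. ennreal (h (x\<^sup>2 + y\<^sup>2)) * indicator {0..} y \<partial>lborel) * indicator {0..} x \<partial>lborel) =
      (\<integral>\<^sup>+x. \<integral>\<^sup>+s. ennreal (x * h (x\<^sup>2 * (1 + s\<^sup>2))) * indicator {0..} x * indicator {0..} s \<partial>lborel \<partial>lborel)"
  proof (intro nn_integral_cong_AE, use AE_lborel_singleton[of 0] in eventually_elim)
    fix x :: real assume "x \<noteq> 0"
    then show "(\<integral>\<^sup>+y. ennreal (h (x\<^sup>2 + y\<^sup>2)) * indicator {0..} y \<partial>lborel) * indicator {0..} x =
      (\<integral>\<^sup>+s. ennreal (x * h (x\<^sup>2 * (1 + s\<^sup>2))) * indicator {0..} x * indicator {0..} s \<partial>lborel)"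
      using nn_integral_ray_rescale[of h x, OF _ nn]
      by (cases "x > 0") (auto simp: nn_integral_multc[symmetric] indicator_def ac_simps)
  qed
  also have "\<dots> = (\<integral>\<^sup>+s. \<integral>\<^sup>+x. ennreal (x * h (x\<^sup>2 * (1 + s\<^sup>2))) * indicator {0..} x * indicator {0..} s \<partial>lborel \<partial>lborel)"
    by (rule lborel_pair.Fubini'[symmetric]) measurable
  also have "\<dots> = (\<integral>\<^sup>+s. ennreal (1 / 2) * I * (ennreal (1 / (1 + s\<^sup>2)) * indicator {0..} s) \<partial>lborel)"
  proof (intro nn_integral_cong)
    fix s :: real
    have "(\<integral>\<^sup>+x. ennreal (x * h (x\<^sup>2 * (1 + s\<^sup>2))) * indicator {0..} x * indicator {0..} s \<partial>lborel)
        = (\<integral>\<^sup>+x. ennreal (x * h (x\<^sup>2 * (1 + s\<^sup>2))) * indicator {0..} x \<partial>lborel) * indicator {0..} s"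
      by (simp add: nn_integral_multc)
    also have "\<dots> = ennreal (1 / (2 * (1 + s\<^sup>2))) * I * indicator {0..} s"
      using nn_integral_ray_radial[of h s, OF assms(1) nn] unfolding I_def by simp
    also have "ennreal (1 / (2 * (1 + s\<^sup>2))) = ennreal (1/2) * ennreal (1 / (1 + s\<^sup>2))"
      by (subst ennreal_mult[symmetric]) (auto simp: add_nonneg_nonneg)
    finally show "(\<integral>\<^sup>+x. ennreal (x * h (x\<^sup>2 * (1 + s\<^sup>2))) * indicator {0..} x * indicator {0..} s \<partial>lborel)
        = ennreal (1 / 2) * I * (ennreal (1 / (1 + s\<^sup>2)) * indicator {0..} s)"
      by (simp add: ac_simps)
  qed
  also have "\<dots> = ennreal (1 / 2) * I * ennreal (pi / 2)"
    by (simp add: nn_integral_cmult nn_integral_atLeast_0_inverse_1_plus_square)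
  finally show ?thesis unfolding I_def by (simp add: ac_simps)
qed

lemma nn_integral_radial:
  fixes h :: "real \<Rightarrow> real"
  assumes [measurable]: "h \<in> borel_measurable borel" and nn: "\<And>z. 0 \<le> h z"
  shows "(\<integral>\<^sup>+x. \<integral>\<^sup>+y. ennreal (h (x\<^sup>2 + y\<^sup>2)) \<partial>lborel \<partial>lborel) =
         ennreal pi * (\<integral>\<^sup>+z. ennreal (h z) * indicator {0..} z \<partial>lborel)"
proof -
  define Q where "Q x = (\<integral>\<^sup>+y. ennreal (h (x\<^sup>2 + y\<^sup>2)) * indicator {0..} y \<partial>lborel)" for x
  have Qm[measurable]: "Q \<in> borel_measurable borel" unfolding Q_def by measurable
  have "(\<integral>\<^sup>+x. \<integral>\<^sup>+y. ennreal (h (x\<^sup>2 + y\<^sup>2)) \<partial>lborel \<partial>lborel) = (\<integral>\<^sup>+x. 2 * Q x \<partial>lborel)"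
    unfolding Q_def by (intro nn_integral_cong nn_integral_even) auto
  also have "\<dots> = ennreal 4 * (\<integral>\<^sup>+x. Q x * indicator {0..} x \<partial>lborel)"
    using nn_integral_even[OF Qm] by (simp add: nn_integral_cmult Q_def mult.assoc[symmetric])
  also have "\<dots> = ennreal 4 * ennreal (1 / 2) * ennreal (pi / 2) * (\<integral>\<^sup>+z. ennreal (h z) * indicator {0..} z \<partial>lborel)"
    unfolding Q_def nn_integral_quadrant_radial[OF assms] by (simp add: ac_simps)
  also have "ennreal 4 * ennreal (1/2) * ennreal (pi / 2) = ennreal (4 * (1/2) * (pi / 2))"
    by (subst ennreal_mult, simp, simp)+ (rule refl)
  finally show ?thesis by simp
qed

section \<open>The Gaussian law \<open>N(0, 1/2)\<close>\<close>

definition normal_half :: "real measure" where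
  "normal_half = density lborel (\<lambda>x. ennreal (normal_density 0 (sqrt (1/2)) x))"

lemma normal_density_half: "normal_density 0 (sqrt (1/2)) x = exp (- x\<^sup>2) / sqrt pi"
  by (simp add: normal_density_def real_sqrt_divide power_divide)

lemma prob_space_normal_half: "prob_space normal_half"
  unfolding normal_half_def by (rule prob_space_normal_density) simp

lemma sets_normal_half [simp, measurable_cong]: "sets normal_half = sets borel"
  and space_normal_half [simp]: "space normal_half = UNIV"
  by (simp_all add: normal_half_def)

lemma nn_integral_normal_half:
  assumes [measurable]: "g \<in> borel_measurable borel"
  shows "(\<integral>\<^sup>+x. g x \<partial>normal_half) = (\<integral>\<^sup>+x. ennreal (exp (- x\<^sup>2) / sqrt pi) * g x \<partial>lborel)"
  unfolding normal_half_def normal_density_half by (subst nn_integral_density) auto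

lemma emeasure_normal_half:
  assumes [measurable]: "A \<in> sets borel"
  shows "emeasure normal_half A = (\<integral>\<^sup>+x. ennreal (exp (- x\<^sup>2) / sqrt pi) * indicator A x \<partial>lborel)"
  unfolding normal_half_def normal_density_half by (subst emeasure_density) auto

lemma AE_normal_half_neq: "AE x in normal_half. x \<noteq> c"
  unfolding normal_half_def by (subst AE_density) (auto intro: AE_mp[OF AE_lborel_singleton[of c]])

lemma nn_integral_normal_density_eq_1: "0 < \<sigma> \<Longrightarrow> (\<integral>\<^sup>+x. ennreal (normal_density \<mu> \<sigma> x) \<partial>lborel) = 1"
  by (subst nn_integral_eq_integral) auto

lemma nn_integral_normal_half_radial:
  fixes f :: "real \<Rightarrow> real"
  assumes [measurable]: "f \<in> borel_measurable borel" and nn: "\<And>z. 0 \<le> f z"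
  shows "(\<integral>\<^sup>+x. \<integral>\<^sup>+y. ennreal (f (x\<^sup>2 + y\<^sup>2)) \<partial>normal_half \<partial>normal_half) =
         (\<integral>\<^sup>+z. ennreal (exp (- z) * f z) * indicator {0..} z \<partial>lborel)"
proof -
  define h where "h z = exp (- z) * f z" for z
  have [measurable]: "h \<in> borel_measurable borel" unfolding h_def by measurable
  have "ennreal (exp (- x\<^sup>2) / sqrt pi) * (ennreal (exp (- y\<^sup>2) / sqrt pi) * ennreal (f (x\<^sup>2 + y\<^sup>2)))
        = ennreal (1 / pi) * ennreal (h (x\<^sup>2 + y\<^sup>2))" for x y
  proof -
    have "exp (- x\<^sup>2) / sqrt pi * (exp (- y\<^sup>2) / sqrt pi * f (x\<^sup>2 + y\<^sup>2)) = 1 / pi * h (x\<^sup>2 + y\<^sup>2)"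
      by (simp add: h_def exp_add[symmetric] field_simps)
    then show ?thesis using nn[of "x\<^sup>2 + y\<^sup>2"] by (simp add: ennreal_mult[symmetric] h_def)
  qed
  then have "(\<integral>\<^sup>+x. \<integral>\<^sup>+y. ennreal (f (x\<^sup>2 + y\<^sup>2)) \<partial>normal_half \<partial>normal_half) =
        ennreal (1 / pi) * (\<integral>\<^sup>+x. \<integral>\<^sup>+y. ennreal (h (x\<^sup>2 + y\<^sup>2)) \<partial>lborel \<partial>lborel)"
    by (simp add: nn_integral_normal_half nn_integral_cmult[symmetric])
  also have "\<dots> = ennreal (1 / pi) * ennreal pi * (\<integral>\<^sup>+z. ennreal (h z) * indicator {0..} z \<partial>lborel)"
    by (subst nn_integral_radial) (auto simp: h_def nn mult.assoc)
  also have "ennreal (1 / pi) * ennreal pi = 1" by (subst ennreal_mult[symmetric]) auto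
  finally show ?thesis unfolding h_def by simp
qed

lemma nn_integral_exp_tail:
  assumes "t \<ge> 0"
  shows "(\<integral>\<^sup>+z. ennreal (exp (- z) * indicator {t<..} z) * indicator {0..} z \<partial>lborel) = ennreal (exp (- t))"
proof -
  have "(\<integral>\<^sup>+z. ennreal (exp (- z) * indicator {t<..} z) * indicator {0..} z \<partial>lborel) =
        (\<integral>\<^sup>+z. ennreal (exp (- z)) * indicator {t..} z \<partial>lborel)"
    by (intro nn_integral_cong_AE, use AE_lborel_singleton[of t] in eventually_elim)
       (use assms in \<open>auto split: split_indicator\<close>)
  also have "\<dots> = ennreal (0 - (- exp (- t)))"
  proof (rule nn_integral_FTC_atLeast)
    have "((\<lambda>z::real. exp (- z)) \<longlongrightarrow> 0) at_top"
      by (rule filterlim_compose[OF exp_at_bot filterlim_uminus_at_bot_at_top])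
    then show "((\<lambda>z::real. - exp (- z)) \<longlongrightarrow> 0) at_top"
      using tendsto_minus by fastforce
  qed (auto intro!: derivative_eq_intros)
  finally show ?thesis by simp
qed

lemma nn_integral_atLeast_0_eq_LBINT:
  fixes F :: "real \<Rightarrow> real"
  assumes [measurable]: "F \<in> borel_measurable borel"
    and bounds: "\<And>z. z \<ge> 0 \<Longrightarrow> 0 \<le> F z \<and> F z \<le> exp (- z)"
  shows "(\<integral>\<^sup>+z. ennreal (F z) * indicator {0..} z \<partial>lborel) = ennreal (LBINT z:{0..}. F z)"
proof -
  have nonneg: "AE z in lborel. 0 \<le> indicator {0..} z *\<^sub>R F z"
    using bounds by (intro AE_I2) (simp add: indicator_def)
  have "integrable lborel (\<lambda>z. indicator {0..} z *\<^sub>R F z)"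
  proof (rule integrableI_nonneg[OF _ nonneg])
    have "(\<integral>\<^sup>+z. ennreal (indicator {0..} z *\<^sub>R F z) \<partial>lborel)
        \<le> (\<integral>\<^sup>+z. ennreal (exp (- z) * indicator {0<..} z) * indicator {0..} z \<partial>lborel)"
      using AE_lborel_singleton[of 0]
      by (intro nn_integral_mono_AE, eventually_elim) (auto simp: bounds indicator_def)
    also have "\<dots> = ennreal (exp (- 0))" by (rule nn_integral_exp_tail) simp
    finally show "(\<integral>\<^sup>+z. ennreal (indicator {0..} z *\<^sub>R F z) \<partial>lborel) < \<infinity>"
      by (simp add: order_le_less_trans)
  qed simp
  then have "(\<integral>\<^sup>+z. ennreal (indicator {0..} z *\<^sub>R F z) \<partial>lborel) = ennreal (LBINT z:{0..}. F z)"
    unfolding set_lebesgue_integral_def using nonneg by (rule nn_integral_eq_integral)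
  moreover have "(\<integral>\<^sup>+z. ennreal (F z) * indicator {0..} z \<partial>lborel)
      = (\<integral>\<^sup>+z. ennreal (indicator {0..} z *\<^sub>R F z) \<partial>lborel)"
    by (intro nn_integral_cong) (simp add: indicator_def)
  ultimately show ?thesis by simp
qed

text \<open>Shifting a symmetric unimodal law can only lower the probability of a centred interval:
  the part of the shifted interval leaving \<open>[-\<surd>T, \<surd>T]\<close> is mirrored onto a part of lower density.\<close>
lemma emeasure_normal_half_shifted_square_le:
  fixes m T :: real
  shows "emeasure normal_half {x. (x + m)\<^sup>2 \<le> T} \<le> emeasure normal_half {x. x\<^sup>2 \<le> T}"
proof -
  define g where "g x = ennreal (exp (- x\<^sup>2) / sqrt pi)" for x :: real
  have [measurable]: "g \<in> borel_measurable borel" unfolding g_def by measurable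
  define J where "J = {x::real. (x + m)\<^sup>2 \<le> T}"
  define B where "B = {x::real. x\<^sup>2 \<le> T}"
  define D where "D = {x::real. (x + m)\<^sup>2 \<le> T \<and> \<not> x\<^sup>2 \<le> T}"
  have [measurable]: "J \<in> sets borel" "B \<in> sets borel" "D \<in> sets borel"
    unfolding J_def B_def D_def by measurable
  have "emeasure normal_half J = (\<integral>\<^sup>+x. g x * indicator (J \<inter> B) x + g x * indicator D x \<partial>lborel)"
    unfolding emeasure_normal_half[OF \<open>J \<in> sets borel\<close>] g_def[symmetric]
    by (intro nn_integral_cong) (auto simp: J_def B_def D_def split: split_indicator)
  also have "\<dots> = (\<integral>\<^sup>+x. g x * indicator (J \<inter> B) x \<partial>lborel) + (\<integral>\<^sup>+x. g x * indicator D x \<partial>lborel)"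
    by (rule nn_integral_add) auto
  also have "(\<integral>\<^sup>+x. g x * indicator D x \<partial>lborel) \<le> (\<integral>\<^sup>+x. g (- x - m) * indicator D x \<partial>lborel)"
  proof (intro nn_integral_mono)
    fix x :: real
    show "g x * indicator D x \<le> g (- x - m) * indicator D x"
    proof (cases "x \<in> D")
      case True
      then have "(x + m)\<^sup>2 < x\<^sup>2" unfolding D_def by auto
      then have "exp (- x\<^sup>2) \<le> exp (- (- x - m)\<^sup>2)" by (simp add: power2_commute add.commute)
      then show ?thesis unfolding g_def
        by (auto intro!: ennreal_leI divide_right_mono split: split_indicator)
    qed simp
  qed
  also have "(\<integral>\<^sup>+x. g (- x - m) * indicator D x \<partial>lborel) = (\<integral>\<^sup>+y. g y * indicator D (- m - y) \<partial>lborel)"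
    using nn_integral_real_affine[of "\<lambda>x. g (- x - m) * indicator D x" "-1" "-m"] by simp
  also have "(\<integral>\<^sup>+x. g x * indicator (J \<inter> B) x \<partial>lborel) + (\<integral>\<^sup>+y. g y * indicator D (- m - y) \<partial>lborel)
      = (\<integral>\<^sup>+y. g y * indicator (J \<inter> B) y + g y * indicator D (- m - y) \<partial>lborel)"
    by (rule nn_integral_add[symmetric]) auto
  also have "\<dots> \<le> (\<integral>\<^sup>+y. g y * indicator B y \<partial>lborel)"
  proof (intro nn_integral_mono)
    fix y :: real
    have "- m - y \<in> D \<Longrightarrow> y \<in> B \<and> y \<notin> J"
      unfolding D_def B_def J_def by (auto simp: power2_commute algebra_simps)
    then show "g y * indicator (J \<inter> B) y + g y * indicator D (- m - y) \<le> g y * indicator B y"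
      by (auto split: split_indicator)
  qed
  also have "\<dots> = emeasure normal_half B"
    unfolding g_def by (rule emeasure_normal_half[symmetric]) (simp add: B_def)
  finally show ?thesis unfolding J_def B_def by (simp add: add_left_mono)
qed

lemma nn_integral_indicator_comp:
  assumes [measurable]: "f \<in> measurable M N" "A \<in> sets N"
  shows "(\<integral>\<^sup>+x. indicator A (f x) \<partial>M) = emeasure M {x \<in> space M. f x \<in> A}"
proof -
  have "(\<integral>\<^sup>+x. indicator A (f x) \<partial>M) = (\<integral>\<^sup>+x. indicator {x \<in> space M. f x \<in> A} x \<partial>M)"
    by (intro nn_integral_cong) (auto split: split_indicator)
  also have "\<dots> = emeasure M {x \<in> space M. f x \<in> A}"
    by (rule nn_integral_indicator) measurable
  finally show ?thesis .
qed

lemma nn_integral_normal_half_square_gt_le_shifted: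
  fixes m t c :: real
  shows "(\<integral>\<^sup>+x. indicator {t<..} (c + x\<^sup>2) \<partial>normal_half)
       \<le> (\<integral>\<^sup>+x. indicator {t<..} (c + (x + m)\<^sup>2) \<partial>normal_half)"
proof -
  interpret prob_space normal_half by (rule prob_space_normal_half)
  have "(\<integral>\<^sup>+x. indicator {t<..} (c + f x) \<partial>normal_half) = 1 - emeasure normal_half {x. f x \<le> t - c}"
    if [measurable]: "f \<in> borel_measurable borel" for f :: "real \<Rightarrow> real"
  proof -
    have "{x \<in> space normal_half. c + f x \<in> {t<..}} = space normal_half - {x. f x \<le> t - c}"
      by auto
    then show ?thesis
      using nn_integral_indicator_comp[of "\<lambda>x. c + f x" normal_half borel "{t<..}"]
        emeasure_compl[of "{x. f x \<le> t - c}" normal_half] emeasure_space_1 by simp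
  qed
  then show ?thesis
    using emeasure_normal_half_shifted_square_le[of m "t - c"] by (simp add: ennreal_minus_mono)
qed

text \<open>\<open>|Z|\<^sup>2\<close> is exponentially distributed for a standard complex Gaussian \<open>Z\<close>, and shifting one
  coordinate at a time (Fubini in between) can only enlarge the tail.\<close>
lemma exp_le_nn_integral_shifted_tail:
  fixes t p1 p2 :: real
  assumes "t \<ge> 0"
  shows "ennreal (exp (- t)) \<le> (\<integral>\<^sup>+x. emeasure normal_half {y. t < (x + p1)\<^sup>2 + (y + p2)\<^sup>2} \<partial>normal_half)"
proof -
  interpret prob_space normal_half by (rule prob_space_normal_half)
  interpret pair_sigma_finite normal_half normal_half
    by (intro pair_sigma_finite.intro sigma_finite_measure_axioms)
  have "ennreal (exp (- t)) = (\<integral>\<^sup>+z. ennreal (exp (- z) * indicator {t<..} z) * indicator {0..} z \<partial>lborel)"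
    using nn_integral_exp_tail[OF assms] ..
  also have "\<dots> = (\<integral>\<^sup>+y. \<integral>\<^sup>+x. indicator {t<..} (y\<^sup>2 + x\<^sup>2) \<partial>normal_half \<partial>normal_half)"
    using nn_integral_normal_half_radial[of "indicator {t<..}"] by (simp add: ennreal_indicator)
  also have "\<dots> \<le> (\<integral>\<^sup>+y. \<integral>\<^sup>+x. indicator {t<..} (y\<^sup>2 + (x + p1)\<^sup>2) \<partial>normal_half \<partial>normal_half)"
    by (intro nn_integral_mono nn_integral_normal_half_square_gt_le_shifted)
  also have "\<dots> = (\<integral>\<^sup>+x. \<integral>\<^sup>+y. indicator {t<..} (y\<^sup>2 + (x + p1)\<^sup>2) \<partial>normal_half \<partial>normal_half)"
    by (rule Fubini') measurable
  also have "\<dots> = (\<integral>\<^sup>+x. \<integral>\<^sup>+y. indicator {t<..} ((x + p1)\<^sup>2 + y\<^sup>2) \<partial>normal_half \<partial>normal_half)"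
    by (simp add: add.commute)
  also have "\<dots> \<le> (\<integral>\<^sup>+x. \<integral>\<^sup>+y. indicator {t<..} ((x + p1)\<^sup>2 + (y + p2)\<^sup>2) \<partial>normal_half \<partial>normal_half)"
    by (intro nn_integral_mono nn_integral_normal_half_square_gt_le_shifted)
  also have "\<dots> = (\<integral>\<^sup>+x. emeasure normal_half {y. t < (x + p1)\<^sup>2 + (y + p2)\<^sup>2} \<partial>normal_half)"
    by (subst nn_integral_indicator_comp[where N = borel]) auto
  finally show ?thesis .
qed

text \<open>Completing the square makes the integrand a multiple of a normal density.\<close>
lemma nn_integral_normal_half_exp_shifted_square:
  fixes a q :: real
  assumes "a > 0"
  shows "(\<integral>\<^sup>+u. ennreal (exp (- (a * (u + q)\<^sup>2))) \<partial>normal_half)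
    = ennreal (exp (- (a * q\<^sup>2 / (1 + a))) / sqrt (1 + a))"
proof -
  define c where "c = a * q / (1 + a)"
  define s where "s = sqrt (1 / (2 * (1 + a)))"
  define K where "K = exp (- (a * q\<^sup>2 / (1 + a))) / sqrt (1 + a)"
  have s: "s > 0" "s\<^sup>2 = 1 / (2 * (1 + a))" unfolding s_def using assms by auto
  have "exp (- u\<^sup>2) / sqrt pi * exp (- (a * (u + q)\<^sup>2)) = K * normal_density (- c) s u" for u
  proof -
    have e: "- u\<^sup>2 - a * (u + q)\<^sup>2 = - (a * q\<^sup>2 / (1 + a)) + (- ((u - - c)\<^sup>2) / (2 * s\<^sup>2))"
    proof -
      obtain b where b: "b = 1 + a" by blast
      then have ab: "a = b - 1" and "b \<noteq> 0" using assms by auto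
      then show ?thesis unfolding s(2) c_def b[symmetric] unfolding ab
        by (simp add: field_simps power2_eq_square)
    qed
    have "sqrt (2 + a * 2) = sqrt (1 + a) * sqrt 2"
      by (subst real_sqrt_mult[symmetric]) (simp add: algebra_simps)
    then have d: "1 / sqrt (2 * pi * s\<^sup>2) = sqrt (1 + a) / sqrt pi"
      unfolding s(2) using assms by (simp add: real_sqrt_divide real_sqrt_mult field_simps)
    have "exp (- u\<^sup>2) / sqrt pi * exp (- (a * (u + q)\<^sup>2)) = exp (- u\<^sup>2 - a * (u + q)\<^sup>2) / sqrt pi"
      by (simp add: exp_diff exp_minus field_simps)
    also have "\<dots> = exp (- (a * q\<^sup>2 / (1 + a))) * exp (- ((u - - c)\<^sup>2) / (2 * s\<^sup>2)) / sqrt pi"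
      unfolding e by (simp add: exp_add[symmetric])
    also have "\<dots> = K * normal_density (- c) s u"
      unfolding normal_density_def K_def d using assms by (simp add: field_simps)
    finally show ?thesis .
  qed
  moreover have "K \<ge> 0" unfolding K_def using assms by simp
  ultimately have "(\<integral>\<^sup>+u. ennreal (exp (- (a * (u + q)\<^sup>2))) \<partial>normal_half) =
        (\<integral>\<^sup>+u. ennreal K * ennreal (normal_density (- c) s u) \<partial>lborel)"
    by (simp add: nn_integral_normal_half ennreal_mult[symmetric])
  also have "\<dots> = ennreal K"
    by (simp add: nn_integral_cmult nn_integral_normal_density_eq_1[OF s(1)])
  finally show ?thesis unfolding K_def .
qed

section \<open>Iterated integrals over finite product measures\<close>

lemma nn_integral_PiM_2:
  assumes "sigma_finite_measure Q" and "i0 \<noteq> i1"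
    and F: "(\<lambda>(a, b). F a b) \<in> borel_measurable (Q \<Otimes>\<^sub>M Q)"
  shows "(\<integral>\<^sup>+v. F (v i0) (v i1) \<partial>PiM {i0, i1} (\<lambda>_. Q)) = (\<integral>\<^sup>+a. \<integral>\<^sup>+b. F a b \<partial>Q \<partial>Q)"
proof -
  interpret product_sigma_finite "\<lambda>_. Q"
    using assms(1) by (simp add: product_sigma_finite_def)
  have "(\<lambda>v. F (v i0) (v i1)) \<in> borel_measurable (PiM {i0, i1} (\<lambda>_. Q))"
    using measurable_comp[OF _ F, of "\<lambda>v. (v i0, v i1)"] by (simp add: comp_def)
  then have "(\<integral>\<^sup>+v. F (v i0) (v i1) \<partial>PiM (insert i0 {i1}) (\<lambda>_. Q)) =
        (\<integral>\<^sup>+a. \<integral>\<^sup>+v. F ((v(i0 := a)) i0) ((v(i0 := a)) i1) \<partial>PiM {i1} (\<lambda>_. Q) \<partial>Q)"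
    by (intro product_nn_integral_insert_rev) (use assms(2) in auto)
  also have "\<dots> = (\<integral>\<^sup>+a. \<integral>\<^sup>+b. F a b \<partial>Q \<partial>Q)"
  proof (intro nn_integral_cong)
    fix a assume "a \<in> space Q"
    then have "F a \<in> borel_measurable Q"
      using measurable_Pair2[OF F] by simp
    then show "(\<integral>\<^sup>+v. F ((v(i0 := a)) i0) ((v(i0 := a)) i1) \<partial>PiM {i1} (\<lambda>_. Q)) = (\<integral>\<^sup>+b. F a b \<partial>Q)"
      using assms(2) by (simp add: product_nn_integral_singleton)
  qed
  finally show ?thesis by simp
qed

lemma nn_integral_PiM_3:
  assumes "sigma_finite_measure Q" and "distinct [i0, i1, i2]"
    and F: "(\<lambda>(a, b, c). F a b c) \<in> borel_measurable (Q \<Otimes>\<^sub>M Q \<Otimes>\<^sub>M Q)"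
  shows "(\<integral>\<^sup>+v. F (v i0) (v i1) (v i2) \<partial>PiM {i0, i1, i2} (\<lambda>_. Q))
    = (\<integral>\<^sup>+a. \<integral>\<^sup>+b. \<integral>\<^sup>+c. F a b c \<partial>Q \<partial>Q \<partial>Q)"
proof -
  interpret product_sigma_finite "\<lambda>_. Q"
    using assms(1) by (simp add: product_sigma_finite_def)
  have "(\<lambda>v. F (v i0) (v i1) (v i2)) \<in> borel_measurable (PiM {i0, i1, i2} (\<lambda>_. Q))"
    using measurable_comp[OF _ F, of "\<lambda>v. (v i0, v i1, v i2)"] by (simp add: comp_def)
  then have "(\<integral>\<^sup>+v. F (v i0) (v i1) (v i2) \<partial>PiM (insert i0 {i1, i2}) (\<lambda>_. Q)) =
        (\<integral>\<^sup>+a. \<integral>\<^sup>+v. F ((v(i0 := a)) i0) ((v(i0 := a)) i1) ((v(i0 := a)) i2) \<partial>PiM {i1, i2} (\<lambda>_. Q) \<partial>Q)"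
    by (intro product_nn_integral_insert_rev) (use assms(2) in auto)
  also have "\<dots> = (\<integral>\<^sup>+a. \<integral>\<^sup>+b. \<integral>\<^sup>+c. F a b c \<partial>Q \<partial>Q \<partial>Q)"
  proof (intro nn_integral_cong)
    fix a assume "a \<in> space Q"
    from assms(2) have ne: "i1 \<noteq> i0" "i2 \<noteq> i0" by auto
    from \<open>a \<in> space Q\<close> have "(\<lambda>(b, c). F a b c) \<in> borel_measurable (Q \<Otimes>\<^sub>M Q)"
      using measurable_Pair2[OF F] by (simp add: split_beta')
    then show "(\<integral>\<^sup>+v. F ((v(i0 := a)) i0) ((v(i0 := a)) i1) ((v(i0 := a)) i2) \<partial>PiM {i1, i2} (\<lambda>_. Q))
        = (\<integral>\<^sup>+b. \<integral>\<^sup>+c. F a b c \<partial>Q \<partial>Q)"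
      using assms(2) nn_integral_PiM_2[OF assms(1), of i1 i2 "F a"] by (simp add: ne)
  qed
  finally show ?thesis by simp
qed

lemma nn_integral_PiM_4:
  assumes "sigma_finite_measure Q" and "distinct [i0, i1, i2, i3]"
    and F: "(\<lambda>(a, b, c, e). F a b c e) \<in> borel_measurable (Q \<Otimes>\<^sub>M Q \<Otimes>\<^sub>M Q \<Otimes>\<^sub>M Q)"
  shows "(\<integral>\<^sup>+v. F (v i0) (v i1) (v i2) (v i3) \<partial>PiM {i0, i1, i2, i3} (\<lambda>_. Q))
    = (\<integral>\<^sup>+a. \<integral>\<^sup>+b. \<integral>\<^sup>+c. \<integral>\<^sup>+e. F a b c e \<partial>Q \<partial>Q \<partial>Q \<partial>Q)"
proof -
  interpret product_sigma_finite "\<lambda>_. Q"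
    using assms(1) by (simp add: product_sigma_finite_def)
  have "(\<lambda>v. F (v i0) (v i1) (v i2) (v i3)) \<in> borel_measurable (PiM {i0, i1, i2, i3} (\<lambda>_. Q))"
    using measurable_comp[OF _ F, of "\<lambda>v. (v i0, v i1, v i2, v i3)"] by (simp add: comp_def)
  then have "(\<integral>\<^sup>+v. F (v i0) (v i1) (v i2) (v i3) \<partial>PiM (insert i0 {i1, i2, i3}) (\<lambda>_. Q)) =
        (\<integral>\<^sup>+a. \<integral>\<^sup>+v. F ((v(i0 := a)) i0) ((v(i0 := a)) i1) ((v(i0 := a)) i2) ((v(i0 := a)) i3)
          \<partial>PiM {i1, i2, i3} (\<lambda>_. Q) \<partial>Q)"
    by (intro product_nn_integral_insert_rev) (use assms(2) in auto)
  also have "\<dots> = (\<integral>\<^sup>+a. \<integral>\<^sup>+b. \<integral>\<^sup>+c. \<integral>\<^sup>+e. F a b c e \<partial>Q \<partial>Q \<partial>Q \<partial>Q)"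
  proof (intro nn_integral_cong)
    fix a assume "a \<in> space Q"
    from assms(2) have ne: "i1 \<noteq> i0" "i2 \<noteq> i0" "i3 \<noteq> i0" by auto
    from \<open>a \<in> space Q\<close> have "(\<lambda>(b, c, e). F a b c e) \<in> borel_measurable (Q \<Otimes>\<^sub>M Q \<Otimes>\<^sub>M Q)"
      using measurable_Pair2[OF F] by (simp add: split_beta')
    then show "(\<integral>\<^sup>+v. F ((v(i0 := a)) i0) ((v(i0 := a)) i1) ((v(i0 := a)) i2) ((v(i0 := a)) i3)
          \<partial>PiM {i1, i2, i3} (\<lambda>_. Q)) = (\<integral>\<^sup>+b. \<integral>\<^sup>+c. \<integral>\<^sup>+e. F a b c e \<partial>Q \<partial>Q \<partial>Q)"
      using assms(2) nn_integral_PiM_3[OF assms(1), of i1 i2 i3 "F a"] by (simp add: ne)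
  qed
  finally show ?thesis by simp
qed

section \<open>A single port\<close>

definition sir :: "real \<Rightarrow> real \<Rightarrow> real \<Rightarrow> real \<Rightarrow> real \<Rightarrow> real \<Rightarrow> real" where
  "sir s sI x y u v = (s\<^sup>2 * (x\<^sup>2 + y\<^sup>2)) / (sI\<^sup>2 * (u\<^sup>2 + v\<^sup>2))"

lemma cmod_Complex_sq_div_eq_sir:
  "(cmod (Complex (s * x) (s * y)))\<^sup>2 / (cmod (Complex (sI * u) (sI * v)))\<^sup>2 = sir s sI x y u v"
  by (simp add: sir_def complex_norm power_mult_distrib distrib_left add_nonneg_nonneg)

lemma sir_scale: "r \<noteq> 0 \<Longrightarrow> sir s sI (r * x) (r * y) (r * u) (r * v) = sir s sI x y u v"
  by (simp add: sir_def power_mult_distrib distrib_left[symmetric] mult.left_commute[of "r\<^sup>2"])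

lemma sir_le_iff:
  assumes "s > 0" "sI > 0" "u\<^sup>2 + v\<^sup>2 > 0"
  shows "sir s sI x y u v \<le> \<gamma> \<longleftrightarrow> x\<^sup>2 + y\<^sup>2 \<le> sI\<^sup>2 * \<gamma> / s\<^sup>2 * (u\<^sup>2 + v\<^sup>2)"
proof -
  have "0 < sI\<^sup>2 * (u\<^sup>2 + v\<^sup>2)" using assms by simp
  then have "sir s sI x y u v \<le> \<gamma> \<longleftrightarrow> s\<^sup>2 * (x\<^sup>2 + y\<^sup>2) \<le> \<gamma> * (sI\<^sup>2 * (u\<^sup>2 + v\<^sup>2))"
    by (simp add: sir_def divide_le_eq)
  also have "\<gamma> * (sI\<^sup>2 * (u\<^sup>2 + v\<^sup>2)) = s\<^sup>2 * (sI\<^sup>2 * \<gamma> / s\<^sup>2 * (u\<^sup>2 + v\<^sup>2))"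
    using assms by (simp add: field_simps)
  finally show ?thesis
    using assms by (simp add: pos_le_divide_eq ac_simps)
qed

lemma nn_integral_sir_le:
  assumes "s > 0" "sI > 0" "u\<^sup>2 + v\<^sup>2 > 0" "\<gamma> > 0"
  shows "(\<integral>\<^sup>+x. \<integral>\<^sup>+y. indicator {..\<gamma>} (sir s sI x y u v) \<partial>normal_half \<partial>normal_half)
    = ennreal (1 - exp (- (sI\<^sup>2 * \<gamma> / s\<^sup>2 * (u\<^sup>2 + v\<^sup>2))))"
proof -
  define t where "t = sI\<^sup>2 * \<gamma> / s\<^sup>2 * (u\<^sup>2 + v\<^sup>2)"
  have "(\<integral>\<^sup>+x. \<integral>\<^sup>+y. indicator {..\<gamma>} (sir s sI x y u v) \<partial>normal_half \<partial>normal_half) =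
        (\<integral>\<^sup>+x. \<integral>\<^sup>+y. ennreal (indicator {..t} (x\<^sup>2 + y\<^sup>2)) \<partial>normal_half \<partial>normal_half)"
    using sir_le_iff[OF assms(1-3)] by (intro nn_integral_cong) (simp add: indicator_def t_def)
  also have "\<dots> = (\<integral>\<^sup>+z. ennreal (exp (- z)) * indicator {0..t} z \<partial>lborel)"
    by (subst nn_integral_normal_half_radial) (auto intro!: nn_integral_cong split: split_indicator)
  also have "\<dots> = ennreal (- exp (- t) - - exp (- 0))"
    using assms by (intro nn_integral_FTC_Icc) (auto intro!: derivative_eq_intros simp: t_def)
  finally show ?thesis by (simp add: t_def)
qed

text \<open>The factor in the statement for a port with correlation \<open>m\<close> to port 1, given
  \<open>z = |g\<^sub>1\<^sup>I|\<^sup>2/\<sigma>\<^sub>I\<^sup>2\<close>.\<close>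
definition outage_factor :: "real \<Rightarrow> real \<Rightarrow> real \<Rightarrow> real" where
  "outage_factor a m z = 1 - 1 / (a + 1) * exp (- (1 / (a + 1)) * (m\<^sup>2 / (1 - m\<^sup>2)) * a * z) /
                     (1 + 4 / (a + 1) * (m\<^sup>2 / (1 - m\<^sup>2)) * a * z)"

lemma outage_factor_alt:
  assumes "m\<^sup>2 < 1" "a > 0" "z \<ge> 0"
  obtains L D where "outage_factor a m z = 1 - L / D"
    and "L = 1 / (1 + a) * exp (- (a * (m\<^sup>2 / (1 - m\<^sup>2) * z) / (1 + a)))"
    and "0 \<le> L" "L \<le> 1" "1 \<le> D"
proof
  let ?c = "m\<^sup>2 / (1 - m\<^sup>2)"
  have "?c \<ge> 0" using assms by simp
  show "outage_factor a m z = 1 - (1 / (1 + a) * exp (- (a * (?c * z) / (1 + a))))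
      / (1 + 4 / (a + 1) * ?c * a * z)"
    unfolding outage_factor_def using assms by (simp add: field_simps)
  show "1 \<le> 1 + 4 / (a + 1) * ?c * a * z" using assms \<open>?c \<ge> 0\<close> by simp
  show "0 \<le> 1 / (1 + a) * exp (- (a * (?c * z) / (1 + a)))" using assms by simp
  have "0 \<le> a * (?c * z) / (1 + a)"
    using assms \<open>?c \<ge> 0\<close> by (intro divide_nonneg_nonneg mult_nonneg_nonneg) auto
  then have "exp (- (a * (?c * z) / (1 + a))) \<le> 1" by simp
  then show "1 / (1 + a) * exp (- (a * (?c * z) / (1 + a))) \<le> 1"
    using assms by (intro mult_le_one) auto
qed simp

lemma outage_factor_bounds:
  assumes "m\<^sup>2 < 1" "a > 0" "z \<ge> 0"
  shows "0 \<le> outage_factor a m z" "outage_factor a m z \<le> 1"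
proof -
  obtain L D where "outage_factor a m z = 1 - L / D" "0 \<le> L" "L \<le> 1" "1 \<le> D"
    using outage_factor_alt[OF assms] by blast
  moreover have "L / D \<le> 1" using \<open>L \<le> 1\<close> \<open>1 \<le> D\<close> by (simp add: divide_le_eq)
  ultimately show "0 \<le> outage_factor a m z" "outage_factor a m z \<le> 1"
    by (simp_all add: divide_nonneg_nonneg)
qed

text \<open>The paper's factor is weaker than what the argument gives: it divides the escape probability
  \<open>L\<close> by \<open>D \<ge> 1\<close>.\<close>
lemma one_minus_escape_le_outage_factor:
  assumes "m\<^sup>2 < 1" "a > 0" "z \<ge> 0"
  shows "1 - 1 / (1 + a) * exp (- (a * (m\<^sup>2 / (1 - m\<^sup>2) * z) / (1 + a))) \<le> outage_factor a m z"
proof -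
  obtain L D where "outage_factor a m z = 1 - L / D"
    and "L = 1 / (1 + a) * exp (- (a * (m\<^sup>2 / (1 - m\<^sup>2) * z) / (1 + a)))"
    and "0 \<le> L" "1 \<le> D"
    using outage_factor_alt[OF assms] by blast
  moreover have "L / D \<le> L" using \<open>0 \<le> L\<close> \<open>1 \<le> D\<close> by (simp add: divide_le_eq mult_le_cancel_left1)
  ultimately show ?thesis by simp
qed

lemma exp_le_nn_integral_sir_gt:
  fixes s sI \<gamma> p1 p2 u v :: real
  assumes s: "s > 0" "sI > 0" and "\<gamma> \<ge> 0" and uv: "u\<^sup>2 + v\<^sup>2 > 0"
  shows "ennreal (exp (- (sI\<^sup>2 * \<gamma> / s\<^sup>2 * (u\<^sup>2 + v\<^sup>2))))
    \<le> (\<integral>\<^sup>+y. \<integral>\<^sup>+x. indicator {\<gamma><..} (sir s sI (x + p1) (y + p2) u v) \<partial>normal_half \<partial>normal_half)"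
proof -
  define t where "t = sI\<^sup>2 * \<gamma> / s\<^sup>2 * (u\<^sup>2 + v\<^sup>2)"
  have "ennreal (exp (- t)) \<le> (\<integral>\<^sup>+y. emeasure normal_half {x. t < (y + p2)\<^sup>2 + (x + p1)\<^sup>2} \<partial>normal_half)"
    by (rule exp_le_nn_integral_shifted_tail) (use assms in \<open>simp add: t_def\<close>)
  also have "\<dots> = (\<integral>\<^sup>+y. \<integral>\<^sup>+x. indicator {\<gamma><..} (sir s sI (x + p1) (y + p2) u v) \<partial>normal_half \<partial>normal_half)"
  proof (intro nn_integral_cong)
    fix y
    have "\<gamma> < sir s sI (x + p1) (y + p2) u v \<longleftrightarrow> t < (y + p2)\<^sup>2 + (x + p1)\<^sup>2" for x
      unfolding not_le[symmetric] sir_le_iff[OF s uv] t_def by linarith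
    then have "{x \<in> space normal_half. sir s sI (x + p1) (y + p2) u v \<in> {\<gamma><..}}
        = {x. t < (y + p2)\<^sup>2 + (x + p1)\<^sup>2}"
      by auto
    then show "emeasure normal_half {x. t < (y + p2)\<^sup>2 + (x + p1)\<^sup>2}
        = (\<integral>\<^sup>+x. indicator {\<gamma><..} (sir s sI (x + p1) (y + p2) u v) \<partial>normal_half)"
      by (subst nn_integral_indicator_comp[where N = borel]) (auto simp: sir_def)
  qed
  finally show ?thesis unfolding t_def .
qed

lemma nn_integral_normal_half_exp_shifted_radial:
  fixes a q1 q2 :: real
  assumes "a > 0"
  shows "(\<integral>\<^sup>+v. \<integral>\<^sup>+u. ennreal (exp (- (a * ((u + q1)\<^sup>2 + (v + q2)\<^sup>2)))) \<partial>normal_half \<partial>normal_half)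
    = ennreal (1 / (1 + a) * exp (- (a * (q1\<^sup>2 + q2\<^sup>2) / (1 + a))))"
proof -
  have "(\<integral>\<^sup>+v. \<integral>\<^sup>+u. ennreal (exp (- (a * ((u + q1)\<^sup>2 + (v + q2)\<^sup>2)))) \<partial>normal_half \<partial>normal_half)
      = (\<integral>\<^sup>+v. \<integral>\<^sup>+u. ennreal (exp (- (a * (u + q1)\<^sup>2))) * ennreal (exp (- (a * (v + q2)\<^sup>2)))
          \<partial>normal_half \<partial>normal_half)"
    by (simp add: ennreal_mult[symmetric] exp_add[symmetric] distrib_left)
  also have "\<dots> = ennreal (exp (- (a * q1\<^sup>2 / (1 + a))) / sqrt (1 + a))
      * ennreal (exp (- (a * q2\<^sup>2 / (1 + a))) / sqrt (1 + a))"
    using nn_integral_normal_half_exp_shifted_square[OF assms]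
    by (simp add: nn_integral_multc nn_integral_cmult)
  also have "\<dots> = ennreal (1 / (1 + a) * exp (- (a * (q1\<^sup>2 + q2\<^sup>2) / (1 + a))))"
  proof -
    have "exp (- (a * q1\<^sup>2 / (1 + a))) * exp (- (a * q2\<^sup>2 / (1 + a))) = exp (- (a * (q1\<^sup>2 + q2\<^sup>2) / (1 + a)))"
      by (simp add: exp_add[symmetric] add_divide_distrib distrib_left)
    moreover have "sqrt (1 + a) * sqrt (1 + a) = 1 + a" using assms by simp
    ultimately show ?thesis
      using assms by (simp add: ennreal_mult[symmetric] field_simps)
  qed
  finally show ?thesis .
qed

text \<open>Given port 1, the signal and the interference at a port with correlation \<open>m\<close> are independent
  complex Gaussians with means set by port 1. A mean can only make the signal larger in law, and
  averaging \<open>exp (- a |interference|\<^sup>2)\<close> is an explicit Gaussian integral.\<close>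
lemma port_escape_lower_bound:
  fixes s sI m \<gamma> x0 y0 u0 v0 :: real
  defines "r \<equiv> sqrt (1 - m\<^sup>2)" and "a \<equiv> sI\<^sup>2 * \<gamma> / s\<^sup>2"
  assumes m: "m\<^sup>2 < 1" and s: "s > 0" "sI > 0" and "\<gamma> > 0"
  shows "ennreal (1 / (1 + a) * exp (- (a * (m\<^sup>2 / (1 - m\<^sup>2) * (u0\<^sup>2 + v0\<^sup>2)) / (1 + a))))
     \<le> (\<integral>\<^sup>+v. \<integral>\<^sup>+u. \<integral>\<^sup>+y. \<integral>\<^sup>+x. indicator {\<gamma><..}
          (sir s sI (r * x + m * x0) (r * y + m * y0) (r * u + m * u0) (r * v + m * v0))
        \<partial>normal_half \<partial>normal_half \<partial>normal_half \<partial>normal_half)"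
proof -
  have r: "r > 0" "r\<^sup>2 = 1 - m\<^sup>2" using m by (auto simp: r_def)
  have a: "a > 0" using assms by (simp add: a_def)
  define p1 p2 q1 q2 where "p1 = m * x0 / r" and "p2 = m * y0 / r" and "q1 = m * u0 / r" and "q2 = m * v0 / r"
  have sir_eq: "sir s sI (r * x + m * x0) (r * y + m * y0) (r * u + m * u0) (r * v + m * v0)
      = sir s sI (x + p1) (y + p2) (u + q1) (v + q2)" for x y u v
  proof -
    have "r * x + m * x0 = r * (x + p1)" "r * y + m * y0 = r * (y + p2)"
      "r * u + m * u0 = r * (u + q1)" "r * v + m * v0 = r * (v + q2)"
      using r by (simp_all add: p1_def p2_def q1_def q2_def field_simps)
    then show ?thesis using r by (simp add: sir_scale)
  qed
  have "q1\<^sup>2 + q2\<^sup>2 = m\<^sup>2 / (1 - m\<^sup>2) * (u0\<^sup>2 + v0\<^sup>2)"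
    unfolding q1_def q2_def using r by (simp add: power_divide power_mult_distrib field_simps)
  then have "ennreal (1 / (1 + a) * exp (- (a * (m\<^sup>2 / (1 - m\<^sup>2) * (u0\<^sup>2 + v0\<^sup>2)) / (1 + a))))
      = (\<integral>\<^sup>+v. \<integral>\<^sup>+u. ennreal (exp (- (a * ((u + q1)\<^sup>2 + (v + q2)\<^sup>2)))) \<partial>normal_half \<partial>normal_half)"
    by (simp add: nn_integral_normal_half_exp_shifted_radial[OF a])
  also have "\<dots> \<le> (\<integral>\<^sup>+v. \<integral>\<^sup>+u. \<integral>\<^sup>+y. \<integral>\<^sup>+x. indicator {\<gamma><..} (sir s sI (x + p1) (y + p2) (u + q1) (v + q2))
      \<partial>normal_half \<partial>normal_half \<partial>normal_half \<partial>normal_half)"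
  proof (rule nn_integral_mono, rule nn_integral_mono_AE)
    fix v
    show "AE u in normal_half. ennreal (exp (- (a * ((u + q1)\<^sup>2 + (v + q2)\<^sup>2))))
        \<le> (\<integral>\<^sup>+y. \<integral>\<^sup>+x. indicator {\<gamma><..} (sir s sI (x + p1) (y + p2) (u + q1) (v + q2))
          \<partial>normal_half \<partial>normal_half)"
      using AE_normal_half_neq[of "- q1"]
    proof eventually_elim
      case (elim u)
      then have "(u + q1)\<^sup>2 + (v + q2)\<^sup>2 > 0"
        by (intro add_pos_nonneg) (auto simp: add_eq_0_iff)
      from exp_le_nn_integral_sir_gt[OF s _ this] \<open>\<gamma> > 0\<close> show ?case
        by (simp add: a_def)
    qed
  qed
  finally show ?thesis by (simp add: sir_eq)
qed

lemma emeasure_port_outage_le: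
  fixes s sI m \<gamma> x0 y0 u0 v0 :: real
  defines "r \<equiv> sqrt (1 - m\<^sup>2)"
  assumes m: "m\<^sup>2 < 1" and s: "s > 0" "sI > 0" and "\<gamma> > 0" and idx: "distinct [i0, i1, i2, i3]"
  shows "emeasure (PiM {i0, i1, i2, i3} (\<lambda>_. normal_half))
     {w \<in> space (PiM {i0, i1, i2, i3} (\<lambda>_. normal_half)).
        sir s sI (r * w i3 + m * x0) (r * w i2 + m * y0) (r * w i1 + m * u0) (r * w i0 + m * v0) \<le> \<gamma>}
     \<le> ennreal (outage_factor (sI\<^sup>2 * \<gamma> / s\<^sup>2) m (u0\<^sup>2 + v0\<^sup>2))"
proof -
  let ?P = "PiM {i0, i1, i2, i3} (\<lambda>_. normal_half)"
  interpret P: prob_space ?P by (intro prob_space_PiM prob_space_normal_half)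
  interpret prob_space normal_half by (rule prob_space_normal_half)
  define a where "a = sI\<^sup>2 * \<gamma> / s\<^sup>2"
  have "a > 0" using assms by (simp add: a_def)
  define F where "F v u y x = (indicator {\<gamma><..}
      (sir s sI (r * x + m * x0) (r * y + m * y0) (r * u + m * u0) (r * v + m * v0)) :: ennreal)"
    for v u y x
  have [measurable]: "(\<lambda>(v, u, y, x). F v u y x) \<in> borel_measurable
      (normal_half \<Otimes>\<^sub>M normal_half \<Otimes>\<^sub>M normal_half \<Otimes>\<^sub>M normal_half)"
    unfolding F_def sir_def by measurable
  define L where "L = 1 / (1 + a) * exp (- (a * (m\<^sup>2 / (1 - m\<^sup>2) * (u0\<^sup>2 + v0\<^sup>2)) / (1 + a)))"
  have "L \<ge> 0" using \<open>a > 0\<close> by (simp add: L_def)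
  define ESC where "ESC = {w \<in> space ?P. \<gamma> <
      sir s sI (r * w i3 + m * x0) (r * w i2 + m * y0) (r * w i1 + m * u0) (r * w i0 + m * v0)}"
  have ESC_sets: "ESC \<in> sets ?P" unfolding ESC_def sir_def by measurable
  have "ennreal L \<le> (\<integral>\<^sup>+v. \<integral>\<^sup>+u. \<integral>\<^sup>+y. \<integral>\<^sup>+x. F v u y x
      \<partial>normal_half \<partial>normal_half \<partial>normal_half \<partial>normal_half)"
    unfolding L_def F_def a_def r_def by (rule port_escape_lower_bound[OF m s \<open>\<gamma> > 0\<close>])
  also have "\<dots> = (\<integral>\<^sup>+w. F (w i0) (w i1) (w i2) (w i3) \<partial>?P)"
    by (rule nn_integral_PiM_4[symmetric]) (use idx in \<open>simp_all add: sigma_finite_measure_axioms\<close>)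
  also have "\<dots> = emeasure ?P ESC"
    by (subst nn_integral_indicator[symmetric, OF ESC_sets])
       (auto intro!: nn_integral_cong simp: ESC_def F_def split: split_indicator)
  finally have "ennreal L \<le> emeasure ?P ESC" .
  then have "emeasure ?P (space ?P - ESC) \<le> 1 - ennreal L"
    using ESC_sets by (simp add: emeasure_compl P.emeasure_space_1 ennreal_minus_mono)
  also have "\<dots> = ennreal (1 - L)" using \<open>L \<ge> 0\<close> by (simp add: ennreal_minus[symmetric])
  also have "\<dots> \<le> ennreal (outage_factor a m (u0\<^sup>2 + v0\<^sup>2))"
    unfolding L_def by (intro ennreal_leI one_minus_escape_le_outage_factor m \<open>a > 0\<close>) simp
  also have "space ?P - ESC = {w \<in> space ?P.
      sir s sI (r * w i3 + m * x0) (r * w i2 + m * y0) (r * w i1 + m * u0) (r * w i0 + m * v0) \<le> \<gamma>}"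
    unfolding ESC_def by auto
  finally show ?thesis unfolding a_def .
qed

section \<open>The receiver\<close>

lemma fa_chan_sq_div:
  fixes N k :: nat and W :: real
  defines "m \<equiv> fa_mu N W k"
  defines "c \<equiv> sqrt (1 - m\<^sup>2)"
  shows "(cmod (fa_chan N W s xs ys k))\<^sup>2 / (cmod (fa_chan N W sI us vs k))\<^sup>2 =
    (if k = 1 then sir s sI (xs 0) (ys 0) (us 0) (vs 0)
     else sir s sI (c * xs k + m * xs 0) (c * ys k + m * ys 0) (c * us k + m * us 0) (c * vs k + m * vs 0))"
  unfolding fa_chan_def m_def c_def by (simp add: cmod_Complex_sq_div_eq_sir)

lemma prod_indicator_eq:
  assumes "finite S"
  shows "(\<Prod>j\<in>S. indicator A (h j) :: 'b :: comm_semiring_1) = (if \<forall>j\<in>S. h j \<in> A then 1 else 0)"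
proof (cases "\<forall>j\<in>S. h j \<in> A")
  case False
  then have "\<exists>j\<in>S. (indicator A (h j) :: 'b) = 0" by (force simp: indicator_def)
  then show ?thesis using assms False by (simp add: prod_zero)
qed simp

lemma nn_integral_indep_var_le:
  assumes "prob_space M" and indep: "prob_space.indep_var M MX X MY Y"
    and f: "f \<in> borel_measurable (MX \<Otimes>\<^sub>M MY)" and g: "g \<in> borel_measurable MX"
    and bound: "\<And>x. x \<in> space MX \<Longrightarrow> (\<integral>\<^sup>+y. f (x, y) \<partial>distr M MY Y) \<le> g x"
  shows "(\<integral>\<^sup>+\<omega>. f (X \<omega>, Y \<omega>) \<partial>M) \<le> (\<integral>\<^sup>+\<omega>. g (X \<omega>) \<partial>M)"
proof -
  interpret prob_space M by (rule assms(1))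
  have rv: "random_variable MX X" "random_variable MY Y"
    and joint: "distr M MX X \<Otimes>\<^sub>M distr M MY Y = distr M (MX \<Otimes>\<^sub>M MY) (\<lambda>x. (X x, Y x))"
    using indep[unfolded indep_var_distribution_eq] by auto
  interpret DX: prob_space "distr M MX X" by (rule prob_space_distr[OF rv(1)])
  interpret DY: prob_space "distr M MY Y" by (rule prob_space_distr[OF rv(2)])
  interpret pair_sigma_finite "distr M MX X" "distr M MY Y"
    by (intro pair_sigma_finite.intro DX.sigma_finite_measure_axioms DY.sigma_finite_measure_axioms)
  have "(\<integral>\<^sup>+\<omega>. f (X \<omega>, Y \<omega>) \<partial>M) = (\<integral>\<^sup>+p. f p \<partial>(distr M MX X \<Otimes>\<^sub>M distr M MY Y))"
    unfolding joint using rv f by (subst nn_integral_distr) auto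
  also have "\<dots> = (\<integral>\<^sup>+x. \<integral>\<^sup>+y. f (x, y) \<partial>distr M MY Y \<partial>distr M MX X)"
    using f by (intro DY.nn_integral_fst[symmetric]) (simp cong: measurable_cong_sets)
  also have "\<dots> \<le> (\<integral>\<^sup>+x. g x \<partial>distr M MX X)"
    by (rule nn_integral_mono) (simp add: bound)
  also have "\<dots> = (\<integral>\<^sup>+\<omega>. g (X \<omega>) \<partial>M)"
    using rv g by (subst nn_integral_distr) auto
  finally show ?thesis .
qed

text \<open>Index \<open>(t, i)\<close> of the Gaussian family: \<open>t = 0, 1, 2, 3\<close> selects the real and imaginary parts
  of the desired and of the interference channel, \<open>i = 0\<close> the component shared with port 1 and
  \<open>i = k \<ge> 2\<close> the innovation of port \<open>k\<close>.\<close>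
locale fluid_antenna =
  fixes M :: "'a measure"
    and N :: nat and W \<sigma> \<sigma>I \<gamma> :: real
    and G :: "nat \<Rightarrow> nat \<Rightarrow> 'a \<Rightarrow> real"
  assumes prob: "prob_space M"
    and N_ge_2: "N \<ge> 2" and W_pos: "W > 0" and \<sigma>_pos: "\<sigma> > 0" and \<sigma>I_pos: "\<sigma>I > 0"
    and \<gamma>_pos: "\<gamma> > 0"
    and indep: "prob_space.indep_vars M (\<lambda>_. borel) (\<lambda>(t, i). G t i) ({..<4} \<times> {0..N})"
    and gauss: "\<And>t i. t < 4 \<Longrightarrow> i \<le> N \<Longrightarrow>
                  distributed M lborel (G t i) (normal_density 0 (sqrt (1/2)))"
begin

sublocale prob_space M by (rule prob)

abbreviation "X \<equiv> \<lambda>(t, i). G t i"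
abbreviation "idx \<equiv> {..<4::nat} \<times> {0..N}"
abbreviation "corr \<equiv> fa_mu N W"

lemma measurable_X: "p \<in> idx \<Longrightarrow> X p \<in> borel_measurable M"
  using distributed_measurable[OF gauss] by (auto cong: measurable_cong_sets)

lemma distr_X: "p \<in> idx \<Longrightarrow> distr M borel (X p) = normal_half"
  using distributed_distr_eq_density[OF gauss]
  by (auto simp: normal_half_def cong: distr_cong)

lemma measurable_restrict_X:
  "J \<subseteq> idx \<Longrightarrow> (\<lambda>\<omega>. restrict (\<lambda>p. X p \<omega>) J) \<in> measurable M (PiM J (\<lambda>_. borel))"
  using measurable_X by (intro measurable_restrict) auto

lemma distr_restrict_X:
  assumes "J \<subseteq> idx" "J \<noteq> {}"
  shows "distr M (PiM J (\<lambda>_. borel)) (\<lambda>\<omega>. restrict (\<lambda>p. X p \<omega>) J) = PiM J (\<lambda>_. normal_half)"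
proof -
  have ind: "indep_vars (\<lambda>_. borel) X J"
    by (rule indep_vars_subset[OF indep assms(1)])
  have rv: "random_variable borel (X p)" if "p \<in> J" for p
    using that assms(1) measurable_X by auto
  have "distr M (PiM J (\<lambda>_. borel)) (\<lambda>\<omega>. restrict (\<lambda>p. X p \<omega>) J)
      = PiM J (\<lambda>p. distr M borel (X p))"
    using ind indep_vars_iff_distr_eq_PiM'[OF assms(2) rv] by simp
  also have "\<dots> = PiM J (\<lambda>_. normal_half)"
    using assms(1) distr_X by (intro PiM_cong) auto
  finally show ?thesis .
qed

text \<open>Conditioning on the gains in \<open>J\<close>: the gains in a disjoint \<open>K\<close> are independent of them and
  i.i.d. \<open>N(0, 1/2)\<close>.\<close>
lemma nn_integral_condition_le:
  assumes "J \<inter> K = {}" "J \<subseteq> idx" "K \<subseteq> idx" "K \<noteq> {}"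
    and f: "f \<in> borel_measurable (PiM J (\<lambda>_. borel) \<Otimes>\<^sub>M PiM K (\<lambda>_. borel))"
    and g: "g \<in> borel_measurable (PiM J (\<lambda>_. borel))"
    and bound: "\<And>w. w \<in> space (PiM J (\<lambda>_. borel)) \<Longrightarrow> (\<integral>\<^sup>+v. f (w, v) \<partial>PiM K (\<lambda>_. normal_half)) \<le> g w"
  shows "(\<integral>\<^sup>+\<omega>. f (restrict (\<lambda>p. X p \<omega>) J, restrict (\<lambda>p. X p \<omega>) K) \<partial>M)
      \<le> (\<integral>\<^sup>+\<omega>. g (restrict (\<lambda>p. X p \<omega>) J) \<partial>M)"
  using nn_integral_indep_var_le[OF prob indep_var_restrict[OF indep assms(1-3)] f g]
    bound distr_restrict_X[OF assms(3,4)] by simp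

definition "\<alpha> = \<sigma>I\<^sup>2 * \<gamma> / \<sigma>\<^sup>2"

definition sir_port1 :: "(nat \<times> nat \<Rightarrow> real) \<Rightarrow> real" where
  "sir_port1 x = sir \<sigma> \<sigma>I (x (0, 0)) (x (1, 0)) (x (2, 0)) (x (3, 0))"

definition sir_port :: "nat \<Rightarrow> (nat \<times> nat \<Rightarrow> real) \<Rightarrow> real" where
  "sir_port k x = (let r = sqrt (1 - (corr k)\<^sup>2) in
     sir \<sigma> \<sigma>I (r * x (0, k) + corr k * x (0, 0)) (r * x (1, k) + corr k * x (1, 0))
       (r * x (2, k) + corr k * x (2, 0)) (r * x (3, k) + corr k * x (3, 0)))"

definition port_factor :: "nat \<Rightarrow> (nat \<times> nat \<Rightarrow> real) \<Rightarrow> ennreal" where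
  "port_factor k x = ennreal (outage_factor \<alpha> (corr k) ((x (2, 0))\<^sup>2 + (x (3, 0))\<^sup>2))"

text \<open>Ports in \<open>S\<close> enter through their outage indicator, ports in \<open>T\<close> through the bound on their
  conditional outage probability given port 1; moving all ports from \<open>S\<close> to \<open>T\<close> is the proof.\<close>
definition outage_mix :: "nat set \<Rightarrow> nat set \<Rightarrow> (nat \<times> nat \<Rightarrow> real) \<Rightarrow> ennreal" where
  "outage_mix S T x = indicator {..\<gamma>} (sir_port1 x) * (\<Prod>j\<in>S. indicator {..\<gamma>} (sir_port j x))
     * (\<Prod>j\<in>T. port_factor j x)"

lemma \<alpha>_pos: "\<alpha> > 0"
  using \<sigma>_pos \<sigma>I_pos \<gamma>_pos by (simp add: \<alpha>_def)

lemma corr_sq_less_1: "k \<in> {2..N} \<Longrightarrow> (corr k)\<^sup>2 < 1"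
  unfolding fa_mu_def using N_ge_2 W_pos by (intro besselJ0_sq_less_1) auto

lemma outage_mix_cong:
  assumes "\<And>t. t < 4 \<Longrightarrow> x (t, 0) = y (t, 0)" "\<And>j t. j \<in> S \<Longrightarrow> t < 4 \<Longrightarrow> x (t, j) = y (t, j)"
  shows "outage_mix S T x = outage_mix S T y"
  unfolding outage_mix_def sir_port1_def sir_port_def port_factor_def using assms
  by (simp cong: prod.cong)

lemma measurable_outage_mix:
  assumes "\<And>t. t < 4 \<Longrightarrow> (t, 0) \<in> J" "\<And>j t. j \<in> S \<Longrightarrow> t < 4 \<Longrightarrow> (t, j) \<in> J"
  shows "outage_mix S T \<in> borel_measurable (PiM J (\<lambda>_. borel))"
proof -
  note [simp] = assms
  have [measurable]: "(\<lambda>x. indicator {..\<gamma>} (sir_port j x) :: ennreal) \<in> borel_measurable (PiM J (\<lambda>_. borel))"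
    if "j \<in> S" for j
  proof -
    note [simp] = that
    show ?thesis unfolding sir_port_def sir_def Let_def by measurable
  qed
  show ?thesis
    unfolding outage_mix_def sir_port1_def port_factor_def sir_def outage_factor_def
    by (intro borel_measurable_times_ennreal borel_measurable_prod_ennreal) measurable
qed

lemma outage_mix_insert:
  assumes "finite S" "k \<notin> S" "finite T" "k \<notin> T"
  shows "outage_mix (insert k S) T x = outage_mix S T x * indicator {..\<gamma>} (sir_port k x)"
    and "outage_mix S (insert k T) x = outage_mix S T x * port_factor k x"
  using assms by (simp_all add: outage_mix_def ac_simps)

text \<open>Given the gains of port 1 and of the ports in \<open>S\<close>, port \<open>k\<close> sees fresh Gaussians, so its outage
  indicator may be replaced by its conditional outage probability, which is bounded by
  \<open>port_factor\<close>.\<close>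
lemma nn_integral_outage_mix_move_le:
  assumes k: "k \<in> {2..N}" and S: "S \<subseteq> {2..N}" "k \<notin> S" and T: "T \<subseteq> {2..N}" "k \<notin> T"
  shows "(\<integral>\<^sup>+\<omega>. outage_mix (insert k S) T (\<lambda>p. X p \<omega>) \<partial>M)
      \<le> (\<integral>\<^sup>+\<omega>. outage_mix S (insert k T) (\<lambda>p. X p \<omega>) \<partial>M)"
proof -
  define J where "J = {..<4::nat} \<times> insert 0 S"
  define K where "K = {(3::nat, k), (2, k), (1, k), (0, k)}"
  have [simp]: "(t, 0) \<in> J" if "t < 4" for t using that by (simp add: J_def)
  have [simp]: "(t, j) \<in> J" if "j \<in> S" "t < 4" for t j using that by (simp add: J_def)
  have [measurable]: "outage_mix S T \<in> borel_measurable (PiM J (\<lambda>_. borel))"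
    by (rule measurable_outage_mix) simp_all
  define r where "r = sqrt (1 - (corr k)\<^sup>2)"
  define f where "f p = outage_mix S T (fst p) * indicator {..\<gamma>} (sir \<sigma> \<sigma>I
      (r * snd p (0, k) + corr k * fst p (0, 0)) (r * snd p (1, k) + corr k * fst p (1, 0))
      (r * snd p (2, k) + corr k * fst p (2, 0)) (r * snd p (3, k) + corr k * fst p (3, 0)))"
    for p :: "(nat \<times> nat \<Rightarrow> real) \<times> (nat \<times> nat \<Rightarrow> real)"
  define g where "g w = outage_mix S T w * port_factor k w" for w
  have "f \<in> borel_measurable (PiM J (\<lambda>_. borel) \<Otimes>\<^sub>M PiM K (\<lambda>_. borel))"
    unfolding f_def sir_def K_def by measurable
  moreover have "g \<in> borel_measurable (PiM J (\<lambda>_. borel))"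
    unfolding g_def port_factor_def outage_factor_def by measurable
  moreover have "(\<integral>\<^sup>+v. f (w, v) \<partial>PiM K (\<lambda>_. normal_half)) \<le> g w" for w
  proof -
    let ?Q = "PiM K (\<lambda>_. normal_half)"
    let ?OUT = "{v \<in> space ?Q. sir \<sigma> \<sigma>I (r * v (0, k) + corr k * w (0, 0)) (r * v (1, k) + corr k * w (1, 0))
        (r * v (2, k) + corr k * w (2, 0)) (r * v (3, k) + corr k * w (3, 0)) \<le> \<gamma>}"
    have "?OUT \<in> sets ?Q" unfolding sir_def K_def by measurable
    then have "(\<integral>\<^sup>+v. f (w, v) \<partial>?Q) = outage_mix S T w * emeasure ?Q ?OUT"
      by (subst nn_integral_cmult_indicator[symmetric]) (auto intro!: nn_integral_cong simp: f_def indicator_def)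
    also have "\<dots> \<le> g w"
      unfolding g_def port_factor_def \<alpha>_def K_def r_def
      by (intro mult_left_mono emeasure_port_outage_le corr_sq_less_1 k \<sigma>_pos \<sigma>I_pos \<gamma>_pos) auto
    finally show ?thesis .
  qed
  ultimately have "(\<integral>\<^sup>+\<omega>. f (restrict (\<lambda>p. X p \<omega>) J, restrict (\<lambda>p. X p \<omega>) K) \<partial>M)
      \<le> (\<integral>\<^sup>+\<omega>. g (restrict (\<lambda>p. X p \<omega>) J) \<partial>M)"
    using S k by (intro nn_integral_condition_le) (auto simp: J_def K_def)
  moreover have "outage_mix S T (restrict (\<lambda>p. X p \<omega>) J) = outage_mix S T (\<lambda>p. X p \<omega>)" for \<omega>
    by (rule outage_mix_cong) simp_all
  moreover have "finite S" "finite T" using S T finite_subset by blast+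
  ultimately show ?thesis
    using S T by (simp add: outage_mix_insert f_def g_def sir_port_def r_def port_factor_def K_def Let_def)
qed

lemma nn_integral_outage_mix_le:
  assumes "S \<subseteq> {2..N}"
  shows "(\<integral>\<^sup>+\<omega>. outage_mix S ({2..N} - S) (\<lambda>p. X p \<omega>) \<partial>M)
      \<le> (\<integral>\<^sup>+\<omega>. outage_mix {} {2..N} (\<lambda>p. X p \<omega>) \<partial>M)"
  using finite_subset[OF assms finite_atLeastAtMost] assms
proof (induction S rule: finite_induct)
  case (insert k S)
  then have "{2..N} - S = insert k ({2..N} - insert k S)" by auto
  then have "(\<integral>\<^sup>+\<omega>. outage_mix (insert k S) ({2..N} - insert k S) (\<lambda>p. X p \<omega>) \<partial>M)
      \<le> (\<integral>\<^sup>+\<omega>. outage_mix S ({2..N} - S) (\<lambda>p. X p \<omega>) \<partial>M)"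
    using insert by (simp add: nn_integral_outage_mix_move_le)
  also have "\<dots> \<le> (\<integral>\<^sup>+\<omega>. outage_mix {} {2..N} (\<lambda>p. X p \<omega>) \<partial>M)"
    using insert by simp
  finally show ?case .
qed simp

definition "outage_integrand z = exp (- z) * (1 - exp (- \<alpha> * z)) * (\<Prod>k\<in>{2..N}. outage_factor \<alpha> (corr k) z)"

lemma prod_outage_factor_bounds:
  assumes "z \<ge> 0"
  shows "0 \<le> (\<Prod>k\<in>{2..N}. outage_factor \<alpha> (corr k) z)" "(\<Prod>k\<in>{2..N}. outage_factor \<alpha> (corr k) z) \<le> 1"
  using outage_factor_bounds[OF corr_sq_less_1 \<alpha>_pos assms] by (auto intro: prod_nonneg prod_le_1)

lemma outage_integrand_bounds:
  assumes "z \<ge> 0"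
  shows "0 \<le> outage_integrand z \<and> outage_integrand z \<le> exp (- z)"
proof -
  have "0 \<le> 1 - exp (- \<alpha> * z)" "1 - exp (- \<alpha> * z) \<le> 1"
    using assms \<alpha>_pos by auto
  then have "0 \<le> (1 - exp (- \<alpha> * z)) * (\<Prod>k\<in>{2..N}. outage_factor \<alpha> (corr k) z)"
    "(1 - exp (- \<alpha> * z)) * (\<Prod>k\<in>{2..N}. outage_factor \<alpha> (corr k) z) \<le> 1"
    using prod_outage_factor_bounds[OF assms] by (auto intro: mult_le_one)
  then show ?thesis
    unfolding outage_integrand_def mult.assoc by (auto intro: mult_left_le)
qed

lemma measurable_outage_integrand [measurable]: "outage_integrand \<in> borel_measurable borel"
  unfolding outage_integrand_def outage_factor_def by measurable

text \<open>Conditional outage probability bound given the interference \<open>z = |g\<^sub>1\<^sup>I|\<^sup>2/\<sigma>\<^sub>I\<^sup>2\<close> at port 1;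
  at \<open>z = 0\<close>, a null event where the ratio at port 1 is \<open>x/0 = 0\<close>, it must be 1.\<close>
definition "port1_outage_bound z =
  (if z \<le> 0 then 1 else (1 - exp (- \<alpha> * z)) * (\<Prod>k\<in>{2..N}. outage_factor \<alpha> (corr k) z))"

lemma port1_outage_bound_nonneg: "0 \<le> port1_outage_bound z"
  using prod_outage_factor_bounds[of z] \<alpha>_pos by (auto simp: port1_outage_bound_def)

lemma measurable_port1_outage_bound [measurable]: "port1_outage_bound \<in> borel_measurable borel"
  unfolding port1_outage_bound_def outage_factor_def by measurable

lemma nn_integral_port1_outage_le:
  "(\<integral>\<^sup>+a. \<integral>\<^sup>+b. indicator {..\<gamma>} (sir \<sigma> \<sigma>I a b u v) \<partial>normal_half \<partial>normal_half)
     * ennreal (\<Prod>j\<in>{2..N}. outage_factor \<alpha> (corr j) (u\<^sup>2 + v\<^sup>2))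
   \<le> ennreal (port1_outage_bound (u\<^sup>2 + v\<^sup>2))"
proof (cases "u\<^sup>2 + v\<^sup>2 > 0")
  case True
  have "0 \<le> 1 - exp (- (\<alpha> * (u\<^sup>2 + v\<^sup>2)))" using True \<alpha>_pos by simp
  moreover have "(\<integral>\<^sup>+a. \<integral>\<^sup>+b. indicator {..\<gamma>} (sir \<sigma> \<sigma>I a b u v) \<partial>normal_half \<partial>normal_half)
      = ennreal (1 - exp (- (\<alpha> * (u\<^sup>2 + v\<^sup>2))))"
    unfolding \<alpha>_def by (rule nn_integral_sir_le[OF \<sigma>_pos \<sigma>I_pos True \<gamma>_pos])
  ultimately show ?thesis
    using True prod_outage_factor_bounds[of "u\<^sup>2 + v\<^sup>2"]
    by (simp add: port1_outage_bound_def ennreal_mult[symmetric])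
next
  case False
  interpret Nh: prob_space normal_half by (rule prob_space_normal_half)
  have "(\<integral>\<^sup>+a. \<integral>\<^sup>+b. indicator {..\<gamma>} (sir \<sigma> \<sigma>I a b u v) \<partial>normal_half \<partial>normal_half)
      \<le> (\<integral>\<^sup>+a. \<integral>\<^sup>+b. 1 \<partial>normal_half \<partial>normal_half)"
    by (intro nn_integral_mono) (simp add: indicator_def)
  then show ?thesis
    using False prod_outage_factor_bounds[of "u\<^sup>2 + v\<^sup>2"] Nh.emeasure_space_1
    by (auto simp: port1_outage_bound_def intro!: mult_le_one)
qed

lemma nn_integral_port1_outage_bound:
  "(\<integral>\<^sup>+c. \<integral>\<^sup>+d. ennreal (port1_outage_bound (c\<^sup>2 + d\<^sup>2)) \<partial>normal_half \<partial>normal_half)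
    = (\<integral>\<^sup>+z. ennreal (outage_integrand z) * indicator {0..} z \<partial>lborel)"
proof -
  have "(\<integral>\<^sup>+c. \<integral>\<^sup>+d. ennreal (port1_outage_bound (c\<^sup>2 + d\<^sup>2)) \<partial>normal_half \<partial>normal_half)
      = (\<integral>\<^sup>+z. ennreal (exp (- z) * port1_outage_bound z) * indicator {0..} z \<partial>lborel)"
    by (rule nn_integral_normal_half_radial) (auto simp: port1_outage_bound_nonneg)
  also have "\<dots> = (\<integral>\<^sup>+z. ennreal (outage_integrand z) * indicator {0..} z \<partial>lborel)"
    using AE_lborel_singleton[of 0]
    by (intro nn_integral_cong_AE, eventually_elim)
       (auto simp: port1_outage_bound_def outage_integrand_def mult.assoc indicator_def)
  finally show ?thesis .
qed

lemma nn_integral_outage_mix_empty_le: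
  "(\<integral>\<^sup>+\<omega>. outage_mix {} {2..N} (\<lambda>p. X p \<omega>) \<partial>M)
    \<le> (\<integral>\<^sup>+z. ennreal (outage_integrand z) * indicator {0..} z \<partial>lborel)"
proof -
  define J where "J = {(2::nat, 0::nat), (3, 0)}"
  define K where "K = {(0::nat, 0::nat), (1, 0)}"
  define P where "P w = (\<Prod>j\<in>{2..N}. port_factor j w)" for w
  define f where "f p = indicator {..\<gamma>} (sir \<sigma> \<sigma>I (snd p (0, 0)) (snd p (1, 0)) (fst p (2, 0)) (fst p (3, 0)))
      * P (fst p)" for p :: "(nat \<times> nat \<Rightarrow> real) \<times> (nat \<times> nat \<Rightarrow> real)"
  define g where "g w = ennreal (port1_outage_bound ((w (2, 0))\<^sup>2 + (w (3, 0))\<^sup>2))"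
    for w :: "nat \<times> nat \<Rightarrow> real"
  have [simp]: "(2, 0) \<in> J" "(3, 0) \<in> J" by (simp_all add: J_def)
  have [measurable]: "P \<in> borel_measurable (PiM J (\<lambda>_. borel))"
    unfolding P_def port_factor_def outage_factor_def by measurable
  have "f \<in> borel_measurable (PiM J (\<lambda>_. borel) \<Otimes>\<^sub>M PiM K (\<lambda>_. borel))"
    unfolding f_def sir_def K_def by measurable
  moreover have gm[measurable]: "g \<in> borel_measurable (PiM J (\<lambda>_. borel))"
    unfolding g_def by measurable
  moreover have "(\<integral>\<^sup>+v. f (w, v) \<partial>PiM K (\<lambda>_. normal_half)) \<le> g w" for w
  proof -
    interpret Nh: prob_space normal_half by (rule prob_space_normal_half)
    define u v where "u = w (2, 0)" and "v = w (3, 0)"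
    have [measurable]: "(\<lambda>(a, b). indicator {..\<gamma>} (sir \<sigma> \<sigma>I a b u v) * P w :: ennreal)
        \<in> borel_measurable (normal_half \<Otimes>\<^sub>M normal_half)"
      unfolding sir_def by measurable
    have "(\<integral>\<^sup>+x. f (w, x) \<partial>PiM K (\<lambda>_. normal_half))
        = (\<integral>\<^sup>+x. indicator {..\<gamma>} (sir \<sigma> \<sigma>I (x (0, 0)) (x (1, 0)) u v) * P w \<partial>PiM K (\<lambda>_. normal_half))"
      by (simp add: f_def u_def v_def)
    also have "\<dots> = (\<integral>\<^sup>+a. \<integral>\<^sup>+b. indicator {..\<gamma>} (sir \<sigma> \<sigma>I a b u v) * P w \<partial>normal_half \<partial>normal_half)"
      unfolding K_def by (rule nn_integral_PiM_2[OF Nh.sigma_finite_measure_axioms]) simp_all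
    also have "\<dots> = (\<integral>\<^sup>+a. \<integral>\<^sup>+b. indicator {..\<gamma>} (sir \<sigma> \<sigma>I a b u v) \<partial>normal_half \<partial>normal_half) * P w"
      unfolding sir_def by (simp add: nn_integral_multc)
    also have "P w = ennreal (\<Prod>j\<in>{2..N}. outage_factor \<alpha> (corr j) (u\<^sup>2 + v\<^sup>2))"
      unfolding P_def port_factor_def u_def v_def
      by (intro prod_ennreal) (auto intro!: outage_factor_bounds corr_sq_less_1 \<alpha>_pos)
    also note nn_integral_port1_outage_le
    finally show ?thesis unfolding g_def u_def v_def .
  qed
  ultimately have "(\<integral>\<^sup>+\<omega>. f (restrict (\<lambda>p. X p \<omega>) J, restrict (\<lambda>p. X p \<omega>) K) \<partial>M)
      \<le> (\<integral>\<^sup>+\<omega>. g (restrict (\<lambda>p. X p \<omega>) J) \<partial>M)"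
    by (intro nn_integral_condition_le) (auto simp: J_def K_def)
  also have "\<dots> = (\<integral>\<^sup>+w. g w \<partial>distr M (PiM J (\<lambda>_. borel)) (\<lambda>\<omega>. restrict (\<lambda>p. X p \<omega>) J))"
    using measurable_restrict_X[of J] gm unfolding J_def
    by (intro nn_integral_distr[symmetric]) (simp_all del: restrict_apply)
  also have "\<dots> = (\<integral>\<^sup>+w. g w \<partial>PiM J (\<lambda>_. normal_half))"
    by (subst distr_restrict_X) (auto simp: J_def)
  also have "\<dots> = (\<integral>\<^sup>+c. \<integral>\<^sup>+d. ennreal (port1_outage_bound (c\<^sup>2 + d\<^sup>2)) \<partial>normal_half \<partial>normal_half)"
    unfolding J_def g_def
    by (rule nn_integral_PiM_2) (auto simp: prob_space_normal_half prob_space_imp_sigma_finite)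
  finally show ?thesis
    by (simp add: nn_integral_port1_outage_bound f_def J_def K_def P_def outage_mix_def sir_port1_def
        port_factor_def)
qed

lemma LBINT_outage_integrand_nonneg: "0 \<le> (LBINT z:{0..}. outage_integrand z)"
  unfolding set_lebesgue_integral_def using outage_integrand_bounds
  by (intro integral_nonneg_AE AE_I2) (simp add: indicator_def)

lemma nn_integral_outage_mix_le_LBINT:
  "(\<integral>\<^sup>+\<omega>. outage_mix {} {2..N} (\<lambda>p. X p \<omega>) \<partial>M) \<le> ennreal (LBINT z:{0..}. outage_integrand z)"
  using nn_integral_outage_mix_empty_le
  by (simp add: nn_integral_atLeast_0_eq_LBINT outage_integrand_bounds)

definition sir_max :: "'a \<Rightarrow> real" where
  "sir_max \<omega> = Max ((\<lambda>k. (cmod (fa_chan N W \<sigma> (\<lambda>i. G 0 i \<omega>) (\<lambda>i. G 1 i \<omega>) k))\<^sup>2 /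
     (cmod (fa_chan N W \<sigma>I (\<lambda>i. G 2 i \<omega>) (\<lambda>i. G 3 i \<omega>) k))\<^sup>2) ` {1..N})"

lemma sir_max_le_iff:
  "sir_max \<omega> \<le> \<gamma> \<longleftrightarrow> sir_port1 (\<lambda>p. X p \<omega>) \<le> \<gamma> \<and> (\<forall>k\<in>{2..N}. sir_port k (\<lambda>p. X p \<omega>) \<le> \<gamma>)"
proof -
  have "{1..N} = insert 1 {2..N}" using N_ge_2 by auto
  then show ?thesis
    unfolding sir_max_def using N_ge_2
    by (auto simp: fa_chan_sq_div sir_port1_def sir_port_def Let_def)
qed

lemma outage_mix_all_ports:
  "outage_mix {2..N} {} (\<lambda>p. X p \<omega>) = indicator {\<omega>. sir_max \<omega> \<le> \<gamma>} \<omega>"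
  unfolding outage_mix_def sir_max_le_iff prod_indicator_eq[OF finite_atLeastAtMost]
  by (simp add: indicator_def)

lemma emeasure_sir_max_le:
  "emeasure M {\<omega> \<in> space M. sir_max \<omega> \<le> \<gamma>} = (\<integral>\<^sup>+\<omega>. outage_mix {2..N} {} (\<lambda>p. X p \<omega>) \<partial>M)"
proof -
  have "outage_mix {2..N} {} \<in> borel_measurable (PiM idx (\<lambda>_. borel))"
    by (rule measurable_outage_mix) auto
  then have "(\<lambda>\<omega>. outage_mix {2..N} {} (restrict (\<lambda>p. X p \<omega>) idx)) \<in> borel_measurable M"
    by (rule measurable_compose[OF measurable_restrict_X[OF order_refl]])
  moreover have "outage_mix {2..N} {} (restrict (\<lambda>p. X p \<omega>) idx) = outage_mix {2..N} {} (\<lambda>p. X p \<omega>)" for \<omega>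
    by (rule outage_mix_cong) auto
  ultimately have [measurable]: "(\<lambda>\<omega>. outage_mix {2..N} {} (\<lambda>p. X p \<omega>)) \<in> borel_measurable M"
    by simp
  have "{\<omega> \<in> space M. sir_max \<omega> \<le> \<gamma>} = {\<omega> \<in> space M. outage_mix {2..N} {} (\<lambda>p. X p \<omega>) = 1}"
    by (auto simp: outage_mix_all_ports indicator_def)
  also have "\<dots> \<in> sets M" by measurable
  finally have "emeasure M {\<omega> \<in> space M. sir_max \<omega> \<le> \<gamma>}
      = (\<integral>\<^sup>+\<omega>. indicator {\<omega> \<in> space M. sir_max \<omega> \<le> \<gamma>} \<omega> \<partial>M)"
    by simp
  also have "\<dots> = (\<integral>\<^sup>+\<omega>. outage_mix {2..N} {} (\<lambda>p. X p \<omega>) \<partial>M)"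
    by (intro nn_integral_cong) (simp add: outage_mix_all_ports indicator_def)
  finally show ?thesis .
qed

end

theorem theorem2:
  fixes M :: "'a measure"
    and N :: nat and W \<sigma> \<sigma>I \<gamma> :: real
    and G :: "nat \<Rightarrow> nat \<Rightarrow> 'a \<Rightarrow> real"
  assumes "prob_space M"
    and "N \<ge> 2" and "W > 0" and "\<sigma> > 0" and "\<sigma>I > 0" and "\<gamma> > 0"
    and indep: "prob_space.indep_vars M (\<lambda>_. borel) (\<lambda>(t, i). G t i) ({..<4} \<times> {0..N})"
    and gauss: "\<And>t i. t < 4 \<Longrightarrow> i \<le> N \<Longrightarrow>
                  distributed M lborel (G t i) (normal_density 0 (sqrt (1/2)))"
  shows "let x = G 0; y = G 1; xI = G 2; yI = G 3;
             g = (\<lambda>\<omega> k. fa_chan N W \<sigma> (\<lambda>i. x i \<omega>) (\<lambda>i. y i \<omega>) k);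
             gI = (\<lambda>\<omega> k. fa_chan N W \<sigma>I (\<lambda>i. xI i \<omega>) (\<lambda>i. yI i \<omega>) k);
             SIR = (\<lambda>\<omega>. Max ((\<lambda>k. (cmod (g \<omega> k))\<^sup>2 / (cmod (gI \<omega> k))\<^sup>2) ` {1..N}));
             a = \<sigma>I\<^sup>2 * \<gamma> / \<sigma>\<^sup>2;
             \<mu> = fa_mu N W
         in measure M {\<omega> \<in> space M. SIR \<omega> \<le> \<gamma>}
            \<le> (LBINT z:{0..}. exp (- z) * (1 - exp (- a * z)) *
                  (\<Prod>k\<in>{2..N}. 1 - 1 / (a + 1) *
                     exp (- (1 / (a + 1)) * ((\<mu> k)\<^sup>2 / (1 - (\<mu> k)\<^sup>2)) * a * z) /
                     (1 + 4 / (a + 1) * ((\<mu> k)\<^sup>2 / (1 - (\<mu> k)\<^sup>2)) * a * z)))"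
proof -
  interpret fluid_antenna M N W \<sigma> \<sigma>I \<gamma> G
    using assms unfolding fluid_antenna_def by blast
  have "emeasure M {\<omega> \<in> space M. sir_max \<omega> \<le> \<gamma>} = (\<integral>\<^sup>+\<omega>. outage_mix {2..N} {} (\<lambda>p. X p \<omega>) \<partial>M)"
    by (rule emeasure_sir_max_le)
  also have "\<dots> \<le> (\<integral>\<^sup>+\<omega>. outage_mix {} {2..N} (\<lambda>p. X p \<omega>) \<partial>M)"
    using nn_integral_outage_mix_le[of "{2..N}"] by simp
  also have "\<dots> \<le> ennreal (LBINT z:{0..}. outage_integrand z)"
    by (rule nn_integral_outage_mix_le_LBINT)
  finally have "measure M {\<omega> \<in> space M. sir_max \<omega> \<le> \<gamma>} \<le> (LBINT z:{0..}. outage_integrand z)"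
    using LBINT_outage_integrand_nonneg by (simp add: emeasure_eq_measure)
  then show ?thesis
    unfolding Let_def sir_max_def outage_integrand_def[abs_def] outage_factor_def \<alpha>_def .
qed

end
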